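(* There exist universal constants $c,c'>0$ such that the following holds. Let $n\in\mathbb{N}$, $\sigma^2>0$, $0<\tau_1\le\dots\le\tau_n$, $L,\Delta>0$ and $0<\varepsilon\le c'L\Delta$. Let $A=\{A_d\}_{d\in\mathbb{N}}$ be a family of zero-respecting algorithms for the time multiple oracles protocol ($A_d$ acting on $\mathbb{R}^d$). Then there exist $d\in\mathbb{N}$, a function $f\in\mathcal{F}_{\Delta,L}$ on $\mathbb{R}^d$, and an admissible choice of oracles and distributions $((O_1,\dots,O_n),(\mathcal{D}_1,\dots,\mathcal{D}_n))$ from the oracle class $\mathcal{O}^{\sigma^2}_{\tau_1,\dots,\tau_n}(f)$ such that, when $A_d$ is run in the time multiple oracles protocol with these oracles, $$\mathbb{E}\Big[\inf_{k\in S_t}\|\nabla f(x^k)\|^2\Big]>\varepsilon\quad\text{for}\quad t=c\cdot\min_{m\in[n]}\left[\Big(\frac1m\sum_{i=1}^m\frac1{\tau_i}\Big)^{-1}\Big(\frac{L\Delta}{\varepsilon}+\frac{\sigma^2L\Delta}{m\varepsilon^2}\Big)\right].$$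
   Context: Notation: $[n]=\{1,\dots,n\}$, $\mathbb{N}_0=\{0,1,2,\dots\}$; for $x\in\mathbb{R}^d$, $\mathrm{supp}(x)=\{i\in[d]: x_i\neq0\}$. Time multiple oracles protocol. There are $n$ oracles $O_1,\dots,O_n$ with distributions $\mathcal{D}_1,\dots,\mathcal{D}_n$ on a sample space $\mathbb{S}_\xi$. An algorithm is a sequence $A=\{A^k\}_{k\ge0}$ with $A^0\in\mathbb{R}_{\ge0}\times[n]\times\mathbb{R}^d$ and $A^k:(\mathbb{R}^d)^k\to\mathbb{R}_{\ge0}\times[n]\times\mathbb{R}^d$ for $k\ge1$, such that for all $k\ge1$ and all $g^1,\dots,g^k$ the first (time) component of $A^k(g^1,\dots,g^k)$ is at least the first component of $A^{k-1}(g^1,\dots,g^{k-1})$. Each oracle $i$ has a state in $\mathbb{R}_{\ge0}\times\mathbb{R}^d\times\{0,1\}$, initially $s_i^0=(0,0,0)$. Set $t^0=0$. For $k=0,1,2,\dots$: $(t^{k+1},i^{k+1},x^k)=A^k(g^1,\dots,g^k)$ ($=A^0$ for $k=0$); draw $\xi^{k+1}\sim\mathcal{D}_{i^{k+1}}$ independently of everything before; $(s^{k+1}_{i^{k+1}},g^{k+1})=O_{i^{k+1}}(t^{k+1},x^k,s^k_{i^{k+1}},\xi^{k+1})$, and $s^{k+1}_j=s^k_j$ for $j\ne i^{k+1}$. For $t\ge0$, $S_t=\{k\in\mathbb{N}_0: t^k\le t\}$. Delayed oracle. For $\tau>0$ and a mapping $G:\mathbb{R}^d\times\mathbb{S}_\xi\to\mathbb{R}^d$,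 the oracle $O^G_\tau(t,x,(s_t,s_x,s_q),\xi)$ returns $((t,x,1),0)$ if $s_q=0$; $((s_t,s_x,1),0)$ if $s_q=1$ and $t<s_t+\tau$; $((0,0,0),G(s_x;\xi))$ if $s_q=1$ and $t\ge s_t+\tau$. Zero-respecting: an algorithm is zero-respecting if $\mathrm{supp}(x^k)\subseteq\bigcup_{j=1}^k\mathrm{supp}(g^j)$ for all $k\in\mathbb{N}_0$ and all realizations (so $x^0=0$). Function class $\mathcal{F}_{\Delta,L}$: differentiable $f:\mathbb{R}^d\to\mathbb{R}$ with $\|\nabla f(x)-\nabla f(y)\|\le L\|x-y\|$ for all $x,y$ and $f(0)-\inf_x f(x)\le\Delta$. Oracle class $\mathcal{O}^{\sigma^2}_{\tau_1,\dots,\tau_n}(f)$: an admissible choice consists of a sample space $\mathbb{S}_\xi$, distributions $\mathcal{D}_1,\dots,\mathcal{D}_n$ on it, and a single mapping $G:\mathbb{R}^d\times\mathbb{S}_\xi\to\mathbb{R}^d$ such that for all $x$ and all $i$, $\mathbb{E}_{\xi\sim\mathcal{D}_i}[G(x;\xi)]=\nabla f(x)$ and $\mathbb{E}_{\xi\sim\mathcal{D}_i}\|G(x;\xi)-\nabla f(x)\|^2\le\sigma^2$; the oracles are $O_i=O^G_{\tau_i}$. *)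

theory Defs
  imports "HOL-Probability.Probability"
begin

text \<open>Points of R^d are represented as functions nat => real vanishing at all
  coordinates >= d (coordinates are indexed 0..d-1).\<close>

type_synonym vecn = "nat \<Rightarrow> real"

definition vecd :: "nat \<Rightarrow> vecn set" where
  "vecd d = {x. \<forall>j\<ge>d. x j = 0}"

definition normd :: "nat \<Rightarrow> vecn \<Rightarrow> real" where
  "normd d x = sqrt (\<Sum>j<d. (x j)^2)"

definition has_grad :: "nat \<Rightarrow> (vecn \<Rightarrow> real) \<Rightarrow> vecn \<Rightarrow> vecn \<Rightarrow> bool" where
  "has_grad d f g x \<longleftrightarrow>
     (\<forall>e>0. \<exists>\<delta>>0. \<forall>h\<in>vecd d. normd d h < \<delta> \<longrightarrow>
        \<bar>f (\<lambda>j. x j + h j) - f x - (\<Sum>j<d. g j * h j)\<bar> \<le> e * normd d h)"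

definition in_FDL :: "nat \<Rightarrow> real \<Rightarrow> real \<Rightarrow> (vecn \<Rightarrow> real) \<Rightarrow> (vecn \<Rightarrow> vecn) \<Rightarrow> bool" where
  "in_FDL d Delta L f gf \<longleftrightarrow>
     (\<forall>x\<in>vecd d. gf x \<in> vecd d \<and> has_grad d f (gf x) x) \<and>
     (\<forall>x\<in>vecd d. \<forall>y\<in>vecd d. normd d (\<lambda>j. gf x j - gf y j) \<le> L * normd d (\<lambda>j. x j - y j)) \<and>
     (\<forall>x\<in>vecd d. f (\<lambda>_. 0) - f x \<le> Delta)"

text \<open>An algorithm: A gs = A^k(g^1,...,g^k) for gs = [g^1,...,g^k]; result (time, oracle index, point).\<close>
type_synonym algo = "vecn list \<Rightarrow> real \<times> nat \<times> vecn"

definition is_algorithm :: "nat \<Rightarrow> nat \<Rightarrow> algo \<Rightarrow> bool" where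
  "is_algorithm n d A \<longleftrightarrow>
     (\<forall>gs. set gs \<subseteq> vecd d \<longrightarrow>
        fst (A gs) \<ge> 0 \<and> fst (snd (A gs)) \<in> {1..n} \<and> snd (snd (A gs)) \<in> vecd d) \<and>
     (\<forall>gs g. set gs \<subseteq> vecd d \<longrightarrow> g \<in> vecd d \<longrightarrow> fst (A (gs @ [g])) \<ge> fst (A gs))"

definition zero_respecting :: "nat \<Rightarrow> algo \<Rightarrow> bool" where
  "zero_respecting d A \<longleftrightarrow>
     (\<forall>gs. set gs \<subseteq> vecd d \<longrightarrow>
        (\<forall>j. snd (snd (A gs)) j \<noteq> 0 \<longrightarrow> (\<exists>g\<in>set gs. g j \<noteq> 0)))"

text \<open>Oracle state (s_t, s_x, s_q), with s_q in {0,1} encoded as bool.\<close>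
type_synonym ostate = "real \<times> vecn \<times> bool"

definition delayed_oracle ::
  "real \<Rightarrow> (vecn \<Rightarrow> real \<Rightarrow> vecn) \<Rightarrow> real \<Rightarrow> vecn \<Rightarrow> ostate \<Rightarrow> real \<Rightarrow> ostate \<times> vecn" where
  "delayed_oracle tau G t x s xi =
     (case s of (st, sx, sq) \<Rightarrow>
        if \<not> sq then ((t, x, True), (\<lambda>_. 0))
        else if t < st + tau then ((st, sx, True), (\<lambda>_. 0))
        else ((0, (\<lambda>_. 0), False), G sx xi))"

text \<open>The randomness omega (i,k) is an independent array of
  samples with omega (i,k) ~ D_i; at step k+1 the sample xi^{k+1} = omega (i^{k+1}, k+1)
  is used (a coupling which yields exactly the law of the protocol).\<close>
fun protocol_run ::
  "algo \<Rightarrow> (nat \<Rightarrow> real) \<Rightarrow> (vecn \<Rightarrow> real \<Rightarrow> vecn) \<Rightarrow> (nat \<times> nat \<Rightarrow> real) \<Rightarrow> nat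
     \<Rightarrow> vecn list \<times> (nat \<Rightarrow> ostate)" where
  "protocol_run A tau G \<omega> 0 = ([], (\<lambda>i. (0, (\<lambda>_. 0), False)))"
| "protocol_run A tau G \<omega> (Suc k) =
     (case protocol_run A tau G \<omega> k of (gs, s) \<Rightarrow>
       (case A gs of (t, i, x) \<Rightarrow>
         (case delayed_oracle (tau i) G t x (s i) (\<omega> (i, Suc k)) of (s', g) \<Rightarrow>
            (gs @ [g], s(i := s')))))"

definition grads where
  "grads A tau G \<omega> k = fst (protocol_run A tau G \<omega> k)"

definition proto_time :: "algo \<Rightarrow> (nat \<Rightarrow> real) \<Rightarrow> (vecn \<Rightarrow> real \<Rightarrow> vecn) \<Rightarrow> (nat \<times> nat \<Rightarrow> real) \<Rightarrow> nat \<Rightarrow> real" where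
  "proto_time A tau G \<omega> k = (if k = 0 then 0 else fst (A (grads A tau G \<omega> (k - 1))))"

definition proto_point :: "algo \<Rightarrow> (nat \<Rightarrow> real) \<Rightarrow> (vecn \<Rightarrow> real \<Rightarrow> vecn) \<Rightarrow> (nat \<times> nat \<Rightarrow> real) \<Rightarrow> nat \<Rightarrow> vecn" where
  "proto_point A tau G \<omega> k = snd (snd (A (grads A tau G \<omega> k)))"

definition S_set where
  "S_set A tau G \<omega> t = {k. proto_time A tau G \<omega> k \<le> t}"

definition sample_measure :: "(nat \<Rightarrow> real measure) \<Rightarrow> (nat \<times> nat \<Rightarrow> real) measure" where
  "sample_measure D = PiM UNIV (\<lambda>p. D (fst p))"

text \<open>Admissible choice in O^{sigma^2}_{tau_1..tau_n}(f): distributions D_i (i in [n]) on the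
  sample space (here: real) and one mapping G : R^d x S -> R^d.\<close>
definition admissible_oracles ::
  "nat \<Rightarrow> nat \<Rightarrow> real \<Rightarrow> (vecn \<Rightarrow> vecn) \<Rightarrow> (nat \<Rightarrow> real measure) \<Rightarrow> (vecn \<Rightarrow> real \<Rightarrow> vecn) \<Rightarrow> bool" where
  "admissible_oracles n d sigma2 gf D G \<longleftrightarrow>
     (\<forall>i. prob_space (D i)) \<and>
     (\<forall>x\<in>vecd d. \<forall>xi. G x xi \<in> vecd d) \<and>
     (\<forall>x\<in>vecd d. \<forall>i\<in>{1..n}.
        (\<forall>j. integrable (D i) (\<lambda>xi. G x xi j) \<and> (\<integral>xi. G x xi j \<partial>D i) = gf x j) \<and>
        integrable (D i) (\<lambda>xi. (normd d (\<lambda>j. G x xi j - gf x j))^2) \<and>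
        (\<integral>xi. (normd d (\<lambda>j. G x xi j - gf x j))^2 \<partial>D i) \<le> sigma2)"

end

theory Submission
  imports Defs
begin

text \<open>On a chain function in \<open>T \<approx> L \<Delta> / \<epsilon>\<close> coordinates, scaled to be \<open>L\<close>-smooth with
  \<open>f 0 - inf f \<le> \<Delta>\<close> and squared gradient norm \<open>\<ge> 4 \<epsilon>\<close> until the last coordinate is reached, a
  zero-respecting method discovers at most one new coordinate per returned gradient. The
  oracle hides that coordinate unless an independent coin of bias \<open>p = min 1 (1600 \<epsilon> / \<sigma>\<^sup>2)\<close>
  shows \<open>1\<close>, which keeps the variance below \<open>\<sigma>\<^sup>2\<close>. Oracles with delay below \<open>2 t / T\<close> need
  such coins to make progress, and by Markov's inequality they make fewer than \<open>T / 2\<close>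
  discoveries before time \<open>t\<close> with probability \<open>\<ge> 1/2\<close>; the slower ones make at most \<open>T / 2\<close>.
  So with probability \<open>\<ge> 1/2\<close> every point queried before \<open>t\<close> has squared gradient norm
  \<open>\<ge> 4 \<epsilon>\<close>, and the expectation exceeds \<open>\<epsilon>\<close>.\<close>

section \<open>A smooth step and functions with bounded Lipschitz derivative\<close>

lemma has_real_derivative_glue:
  fixes f g h :: "real \<Rightarrow> real"
  assumes g: "(g has_real_derivative D) (at x)" and h: "(h has_real_derivative D) (at x)"
    and d: "d > 0" and fg: "\<And>y. x - d < y \<Longrightarrow> y \<le> x \<Longrightarrow> f y = g y"
    and fh: "\<And>y. x < y \<Longrightarrow> y < x + d \<Longrightarrow> f y = h y" and gh: "g x = h x"
  shows "(f has_real_derivative D) (at x)"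
proof -
  have gl: "((\<lambda>y. (g y - g x) / (y - x)) \<longlongrightarrow> D) (at x)"
    using g by (simp add: has_field_derivative_iff)
  have hl: "((\<lambda>y. (h y - h x) / (y - x)) \<longlongrightarrow> D) (at x)"
    using h by (simp add: has_field_derivative_iff)
  have fx: "f x = g x" "f x = h x" using fg[of x] gh d by auto
  have left: "((\<lambda>y. (f y - f x) / (y - x)) \<longlongrightarrow> D) (at_left x)"
  proof (rule Lim_transform_eventually[OF tendsto_mono[OF _ gl]])
    show "\<forall>\<^sub>F y in at_left x. (g y - g x) / (y - x) = (f y - f x) / (y - x)"
      using d fx fg by (auto simp: eventually_at_left_field intro!: exI[of _ "x - d"])
  qed (rule at_le, simp)
  have right: "((\<lambda>y. (f y - f x) / (y - x)) \<longlongrightarrow> D) (at_right x)"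
  proof (rule Lim_transform_eventually[OF tendsto_mono[OF _ hl]])
    show "\<forall>\<^sub>F y in at_right x. (h y - h x) / (y - x) = (f y - f x) / (y - x)"
      using d fx fh by (auto simp: eventually_at_right_field intro!: exI[of _ "x + d"])
  qed (rule at_le, simp)
  show ?thesis using left right by (simp add: has_field_derivative_iff filterlim_at_split)
qed

lemma has_real_derivative_on_interval:
  fixes f g :: "real \<Rightarrow> real"
  assumes "(g has_real_derivative D) (at x)" "a < x" "x < b"
    and "\<And>y. a < y \<Longrightarrow> y < b \<Longrightarrow> f y = g y"
  shows "(f has_real_derivative D) (at x)"
  by (rule has_field_derivative_transform_within_open[of g D x "{a<..<b}"]) (use assms in auto)

definition smooth_step :: "real \<Rightarrow> real" where
  "smooth_step y =
     (if y \<le> 0 then 0 else if y \<le> 1/2 then 2*y^2 else if y \<le> 1 then 1 - 2*(1-y)^2 else 1)"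

definition smooth_step_deriv :: "real \<Rightarrow> real" where
  "smooth_step_deriv y = (if y \<le> 0 then 0 else if y \<le> 1/2 then 4*y else if y \<le> 1 then 4*(1-y) else 0)"

lemma smooth_step_has_derivative: "(smooth_step has_real_derivative smooth_step_deriv x) (at x)"
proof -
  have q1: "((\<lambda>y. 2*y^2) has_real_derivative 4*x) (at x)" for x :: real
    by (auto intro!: derivative_eq_intros)
  have q2: "((\<lambda>y. 1 - 2*(1-y)^2) has_real_derivative 4*(1-x)) (at x)" for x :: real
    by (auto intro!: derivative_eq_intros)
  have c0: "((\<lambda>y. 0) has_real_derivative 0) (at x)" "((\<lambda>y. 1) has_real_derivative 0) (at x)"
    for x :: real
    by auto
  consider "x < 0" | "x = 0" | "0 < x" "x < 1/2" | "x = 1/2" | "1/2 < x" "x < 1" | "x = 1" | "x > 1"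
    by linarith
  then show ?thesis
  proof cases
    case 1
    then have e: "smooth_step_deriv x = 0" by (simp add: smooth_step_deriv_def)
    show ?thesis
      unfolding e by (rule has_real_derivative_on_interval[OF c0(1), of "x - 1" _ 0])
        (use 1 in \<open>auto simp: smooth_step_def\<close>)
  next
    case 2
    then have e: "smooth_step_deriv x = 0" by (simp add: smooth_step_deriv_def)
    show ?thesis
      unfolding e by (rule has_real_derivative_glue[OF c0(1), where d="1/2" and h="\<lambda>y. 2*y^2"])
        (use 2 q1[of 0] in \<open>auto simp: smooth_step_def\<close>)
  next
    case 3
    then have e: "smooth_step_deriv x = 4*x" by (simp add: smooth_step_deriv_def)
    show ?thesis
      unfolding e by (rule has_real_derivative_on_interval[OF q1, of 0 _ "1/2"])
        (use 3 in \<open>auto simp: smooth_step_def\<close>)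
  next
    case 4
    have e: "smooth_step_deriv (1/2) = 2" by (simp add: smooth_step_deriv_def)
    have "((\<lambda>y. 2*y^2) has_real_derivative 2) (at (1/2))"
      "((\<lambda>y. 1 - 2*(1-y)^2) has_real_derivative 2) (at (1/2))"
      using q1[of "1/2"] q2[of "1/2"] by simp_all
    then show ?thesis
      unfolding 4 e by (rule has_real_derivative_glue[where d="1/2"])
        (auto simp: smooth_step_def power2_eq_square)
  next
    case 5
    then have e: "smooth_step_deriv x = 4*(1-x)" by (simp add: smooth_step_deriv_def)
    show ?thesis
      unfolding e by (rule has_real_derivative_on_interval[OF q2, of "1/2" _ 1])
        (use 5 in \<open>auto simp: smooth_step_def\<close>)
  next
    case 6
    then have e: "smooth_step_deriv x = 4*(1-x)" by (simp add: smooth_step_deriv_def)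
    show ?thesis
      unfolding e by (rule has_real_derivative_glue[OF q2 _, where d="1/2" and h="\<lambda>y. 1"])
        (use 6 c0(2)[of 1] in \<open>auto simp: smooth_step_def\<close>)
  next
    case 7
    then have e: "smooth_step_deriv x = 0" by (simp add: smooth_step_deriv_def)
    show ?thesis
      unfolding e by (rule has_real_derivative_on_interval[OF c0(2), of 1 _ "x+1"])
        (use 7 in \<open>auto simp: smooth_step_def\<close>)
  qed
qed

lemma smooth_step_bounds: "0 \<le> smooth_step y" "smooth_step y \<le> 1"
proof -
  have "y \<le> 1/2 \<Longrightarrow> 0 < y \<Longrightarrow> y^2 \<le> (1/2)^2" "1/2 < y \<Longrightarrow> y \<le> 1 \<Longrightarrow> (1-y)^2 \<le> (1/2)^2"
    by (intro power_mono; simp)+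
  then show "0 \<le> smooth_step y" "smooth_step y \<le> 1"
    by (auto simp: smooth_step_def power2_eq_square)
qed

lemma smooth_step_deriv_bounds: "0 \<le> smooth_step_deriv y" "smooth_step_deriv y \<le> 2"
  by (auto simp: smooth_step_deriv_def)

lemma smooth_step_deriv_lipschitz:
  "\<bar>smooth_step_deriv x - smooth_step_deriv y\<bar> \<le> 4 * \<bar>x - y\<bar>"
  by (auto simp: smooth_step_deriv_def abs_if)

lemma smooth_step_0: "smooth_step 0 = 0" "smooth_step_deriv 0 = 0"
  by (simp_all add: smooth_step_def smooth_step_deriv_def)

lemma smooth_step_ge_1: "y \<ge> 1 \<Longrightarrow> smooth_step y = 1"
  by (simp add: smooth_step_def)

lemma smooth_step_deriv_middle:
  "1/4 < y \<Longrightarrow> y < 3/4 \<Longrightarrow> smooth_step_deriv y \<ge> 1"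
  by (auto simp: smooth_step_deriv_def)

definition smooth_bounded ::
  "(real \<Rightarrow> real) \<Rightarrow> (real \<Rightarrow> real) \<Rightarrow> real \<Rightarrow> real \<Rightarrow> real \<Rightarrow> bool" where
  "smooth_bounded f f' M D K \<longleftrightarrow> (\<forall>x. (f has_real_derivative f' x) (at x)) \<and> (\<forall>x. \<bar>f x\<bar> \<le> M) \<and>
     (\<forall>x. \<bar>f' x\<bar> \<le> D) \<and> (\<forall>x y. \<bar>f' x - f' y\<bar> \<le> K * \<bar>x - y\<bar>)"

lemma smooth_bounded_nonneg:
  assumes "smooth_bounded f f' M D K"
  shows "K \<ge> 0" "M \<ge> 0" "D \<ge> 0"
proof -
  have "\<bar>f' 1 - f' 0\<bar> \<le> K * \<bar>1 - 0\<bar>" "\<bar>f 0\<bar> \<le> M" "\<bar>f' 0\<bar> \<le> D"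
    using assms unfolding smooth_bounded_def by blast+
  then show "K \<ge> 0" "M \<ge> 0" "D \<ge> 0" by (auto intro: order_trans[OF abs_ge_zero])
qed

lemma smooth_bounded_mvt:
  assumes "smooth_bounded f f' M D K"
  obtains z where "\<bar>z - a\<bar> \<le> \<bar>u\<bar>" "f (a + u) - f a = f' z * u"
proof -
  have der: "\<And>x. (f has_real_derivative f' x) (at x)" using assms by (auto simp: smooth_bounded_def)
  consider "u = 0" | "u > 0" | "u < 0" by linarith
  then show ?thesis
  proof cases
    case 1 then show ?thesis by (intro that[of a]) auto
  next
    case 2
    from MVT2[of a "a+u" f f'] der 2
    obtain z where "a < z" "z < a + u" "f (a+u) - f a = (a + u - a) * f' z" by auto
    then show ?thesis by (intro that[of z]) auto
  next
    case 3
    from MVT2[of "a+u" a f f'] der 3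
    obtain z where "a + u < z" "z < a" "f a - f (a+u) = (a - (a + u)) * f' z" by auto
    then show ?thesis by (intro that[of z]) (auto simp: algebra_simps)
  qed
qed

lemma smooth_bounded_lipschitz:
  assumes "smooth_bounded f f' M D K"
  shows "\<bar>f x - f y\<bar> \<le> D * \<bar>x - y\<bar>"
proof -
  obtain z where z: "f (y + (x - y)) - f y = f' z * (x - y)"
    using smooth_bounded_mvt[OF assms] by blast
  have "\<bar>f' z\<bar> \<le> D" using assms by (auto simp: smooth_bounded_def)
  then have "\<bar>f' z * (x - y)\<bar> \<le> D * \<bar>x - y\<bar>" by (simp add: abs_mult mult_right_mono)
  with z show ?thesis by simp
qed

lemma smooth_bounded_taylor:
  assumes "smooth_bounded f f' M D K"
  shows "\<bar>f (a + u) - f a - f' a * u\<bar> \<le> K * u^2"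
proof -
  obtain z where z: "\<bar>z - a\<bar> \<le> \<bar>u\<bar>" "f (a + u) - f a = f' z * u"
    using smooth_bounded_mvt[OF assms] by blast
  have K: "\<bar>f' z - f' a\<bar> \<le> K * \<bar>z - a\<bar>" using assms by (auto simp: smooth_bounded_def)
  have "\<bar>f (a + u) - f a - f' a * u\<bar> = \<bar>f' z - f' a\<bar> * \<bar>u\<bar>"
    using z by (simp add: abs_mult[symmetric] algebra_simps)
  also have "\<dots> \<le> K * \<bar>z - a\<bar> * \<bar>u\<bar>" using K by (simp add: mult_right_mono)
  also have "\<dots> \<le> K * \<bar>u\<bar> * \<bar>u\<bar>"
    using z(1) smooth_bounded_nonneg[OF assms] by (intro mult_right_mono mult_left_mono) auto
  finally show ?thesis by (simp add: power2_eq_square)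
qed

lemma smooth_bounded_reflect:
  assumes "smooth_bounded f f' M D K"
  shows "smooth_bounded (\<lambda>x. f (- x)) (\<lambda>x. - f' (- x)) M D K"
  unfolding smooth_bounded_def
proof (intro conjI allI)
  fix x y
  have "(f has_real_derivative f' (-x)) (at (-x))" using assms by (simp add: smooth_bounded_def)
  then show "((\<lambda>x. f (- x)) has_real_derivative - f' (- x)) (at x)"
    using DERIV_mirror by blast
  show "\<bar>f (- x)\<bar> \<le> M" "\<bar>- f' (- x)\<bar> \<le> D" using assms by (simp_all add: smooth_bounded_def)
  have "\<bar>f' (-x) - f' (-y)\<bar> \<le> K * \<bar>-x - -y\<bar>" using assms unfolding smooth_bounded_def by blast
  then show "\<bar>- f' (- x) - - f' (- y)\<bar> \<le> K * \<bar>x - y\<bar>" by (simp add: abs_minus_commute)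
qed

lemma smooth_bounded_rescale:
  assumes f: "smooth_bounded f f' M D K" and l: "l > 0" and b: "b \<ge> 0"
  shows "smooth_bounded (\<lambda>x. b * f (x / l + s)) (\<lambda>x. b / l * f' (x / l + s)) (b * M) (b * D / l)
           (b * K / l^2)"
  unfolding smooth_bounded_def
proof (intro conjI allI)
  fix x y
  have "(f has_real_derivative f' (x / l + s)) (at (x / l + s))"
    using f by (simp add: smooth_bounded_def)
  moreover have "((\<lambda>x. x / l + s) has_real_derivative 1 / l) (at x)"
    using l by (auto intro!: derivative_eq_intros)
  ultimately have "((\<lambda>x. f (x / l + s)) has_real_derivative f' (x / l + s) * (1 / l)) (at x)"
    by (rule DERIV_chain2)
  then have "((\<lambda>x. b * f (x / l + s)) has_real_derivative b * (f' (x / l + s) * (1 / l))) (at x)"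
    by (rule DERIV_cmult)
  then show "((\<lambda>x. b * f (x / l + s)) has_real_derivative b / l * f' (x / l + s)) (at x)"
    by (simp add: field_simps)
  have "\<bar>f (x / l + s)\<bar> \<le> M" "\<bar>f' (x / l + s)\<bar> \<le> D" using f by (simp_all add: smooth_bounded_def)
  then show "\<bar>b * f (x / l + s)\<bar> \<le> b * M" "\<bar>b / l * f' (x / l + s)\<bar> \<le> b * D / l"
    using l b by (auto simp: abs_mult intro!: mult_left_mono divide_right_mono)
  have "\<bar>f' (x/l + s) - f' (y/l + s)\<bar> \<le> K * \<bar>(x/l + s) - (y/l + s)\<bar>"
    using f unfolding smooth_bounded_def by blast
  also have "\<bar>(x/l + s) - (y/l + s)\<bar> = \<bar>x - y\<bar> / l"
    using l by (simp add: diff_divide_distrib[symmetric])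
  finally have h: "\<bar>f' (x/l + s) - f' (y/l + s)\<bar> \<le> K * (\<bar>x - y\<bar> / l)" .
  have "b / l * f' (x / l + s) - b / l * f' (y / l + s) = b / l * (f' (x/l + s) - f' (y/l + s))"
    by (simp add: right_diff_distrib)
  then have "\<bar>b / l * f' (x / l + s) - b / l * f' (y / l + s)\<bar> = b / l * \<bar>f' (x/l + s) - f' (y/l + s)\<bar>"
    using l b by (simp only: abs_mult) simp
  also have "\<dots> \<le> b / l * (K * (\<bar>x - y\<bar> / l))" using h l b by (intro mult_left_mono) auto
  also have "\<dots> = b * K / l^2 * \<bar>x - y\<bar>" by (simp add: power2_eq_square field_simps)
  finally show "\<bar>b / l * f' (x / l + s) - b / l * f' (y / l + s)\<bar> \<le> b * K / l\<^sup>2 * \<bar>x - y\<bar>" .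
qed

lemma smooth_bounded_smooth_step: "smooth_bounded smooth_step smooth_step_deriv 1 2 4"
  unfolding smooth_bounded_def
  using smooth_step_has_derivative smooth_step_bounds smooth_step_deriv_bounds
    smooth_step_deriv_lipschitz
  by (auto simp: abs_le_iff)

lemma abs_mult_le_sum_squares: "\<bar>a\<bar> * \<bar>b\<bar> \<le> a^2 + (b::real)^2"
proof -
  have "0 \<le> (\<bar>a\<bar> - \<bar>b\<bar>)^2" by simp
  then have "2 * (\<bar>a\<bar> * \<bar>b\<bar>) \<le> a^2 + b^2" by (simp add: power2_diff)
  moreover have "0 \<le> \<bar>a\<bar> * \<bar>b\<bar>" by simp
  ultimately show ?thesis by linarith
qed

lemma smooth_bounded_mult_taylor:
  assumes f1: "smooth_bounded f1 f1' M1 D1 K1" and f2: "smooth_bounded f2 f2' M2 D2 K2"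
  shows "\<bar>f1 (u + a) * f2 (v + b) - f1 u * f2 v - f1' u * f2 v * a - f1 u * f2' v * b\<bar>
          \<le> (K1 * M2 + D1 * D2 + M1 * K2) * (a^2 + b^2)"
proof -
  note n1 = smooth_bounded_nonneg[OF f1] and n2 = smooth_bounded_nonneg[OF f2]
  have t1: "\<bar>f1 (u + a) - f1 u - f1' u * a\<bar> \<le> K1 * a^2" by (rule smooth_bounded_taylor[OF f1])
  have t2: "\<bar>f2 (v + b) - f2 v - f2' v * b\<bar> \<le> K2 * b^2" by (rule smooth_bounded_taylor[OF f2])
  have l2: "\<bar>f2 (v + b) - f2 v\<bar> \<le> D2 * \<bar>b\<bar>" using smooth_bounded_lipschitz[OF f2, of "v+b" v] by simp
  have m2: "\<bar>f2 (v + b)\<bar> \<le> M2" and m1: "\<bar>f1 u\<bar> \<le> M1" and d1: "\<bar>f1' u\<bar> \<le> D1"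
    using f1 f2 by (auto simp: smooth_bounded_def)
  have eq: "f1 (u + a) * f2 (v + b) - f1 u * f2 v - f1' u * f2 v * a - f1 u * f2' v * b =
     (f1 (u + a) - f1 u - f1' u * a) * f2 (v + b) + f1' u * a * (f2 (v + b) - f2 v)
     + f1 u * (f2 (v + b) - f2 v - f2' v * b)"
    by (simp add: algebra_simps)
  have "\<bar>(f1 (u + a) - f1 u - f1' u * a) * f2 (v + b)\<bar> \<le> K1 * a^2 * M2"
    unfolding abs_mult by (intro mult_mono t1 m2) (auto simp: n1)
  moreover have "\<bar>f1' u * a * (f2 (v + b) - f2 v)\<bar> \<le> D1 * \<bar>a\<bar> * (D2 * \<bar>b\<bar>)"
    unfolding abs_mult by (intro mult_mono l2 d1 order_refl) (auto simp: n1)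
  moreover have "\<bar>f1 u * (f2 (v + b) - f2 v - f2' v * b)\<bar> \<le> M1 * (K2 * b^2)"
    unfolding abs_mult by (intro mult_mono t2 m1) (auto simp: n1)
  moreover have "D1 * \<bar>a\<bar> * (D2 * \<bar>b\<bar>) \<le> D1 * D2 * (a^2 + b^2)"
    using n1 n2 abs_mult_le_sum_squares[of a b]
    by (simp add: mult_left_mono mult.assoc mult.left_commute)
  moreover have "K1 * a^2 * M2 \<le> K1 * M2 * (a^2 + b^2)"
    using n1 n2 mult_left_mono[of "a^2" "a^2+b^2" "K1 * M2"] by (simp add: mult.commute mult.left_commute)
  moreover have "M1 * (K2 * b^2) \<le> M1 * K2 * (a^2 + b^2)"
    using n1 n2 mult_left_mono[of "b^2" "a^2+b^2" "K2 * M1"] by (simp add: mult.commute mult.left_commute)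
  moreover have "\<bar>X + Y + Z\<bar> \<le> \<bar>X\<bar> + \<bar>Y\<bar> + \<bar>Z\<bar>" for X Y Z :: real
    by (metis abs_triangle_ineq add_right_mono order_trans)
  ultimately show ?thesis
    unfolding eq distrib_right by (smt (verit))
qed

lemma smooth_bounded_mult_deriv_lipschitz:
  assumes f1: "smooth_bounded f1 f1' M1 D1 K1" and f2: "smooth_bounded f2 f2' M2 D2 K2"
  shows "\<bar>f1 u * f2' v - f1 u' * f2' v'\<bar> \<le> D1 * D2 * \<bar>u - u'\<bar> + M1 * K2 * \<bar>v - v'\<bar>"
proof -
  note n1 = smooth_bounded_nonneg[OF f1]
  have a: "\<bar>f1 u - f1 u'\<bar> \<le> D1 * \<bar>u - u'\<bar>" by (rule smooth_bounded_lipschitz[OF f1])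
  have b: "\<bar>f2' v - f2' v'\<bar> \<le> K2 * \<bar>v - v'\<bar>" "\<bar>f2' v\<bar> \<le> D2" "\<bar>f1 u'\<bar> \<le> M1"
    using f1 f2 by (auto simp: smooth_bounded_def)
  have "f1 u * f2' v - f1 u' * f2' v' = (f1 u - f1 u') * f2' v + f1 u' * (f2' v - f2' v')"
    by (simp add: algebra_simps)
  moreover have "\<bar>(f1 u - f1 u') * f2' v\<bar> \<le> D1 * \<bar>u - u'\<bar> * D2"
    unfolding abs_mult by (intro mult_mono a b) (auto simp: n1)
  moreover have "\<bar>f1 u' * (f2' v - f2' v')\<bar> \<le> M1 * (K2 * \<bar>v - v'\<bar>)"
    unfolding abs_mult by (intro mult_mono b) (auto simp: n1)
  moreover have "\<bar>X + Y\<bar> \<le> \<bar>X\<bar> + \<bar>Y\<bar>" for X Y :: real by (rule abs_triangle_ineq)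
  ultimately show ?thesis by (simp add: algebra_simps)
qed

lemma smooth_bounded_deriv_mult_lipschitz:
  assumes f1: "smooth_bounded f1 f1' M1 D1 K1" and f2: "smooth_bounded f2 f2' M2 D2 K2"
  shows "\<bar>f1' u * f2 v - f1' u' * f2 v'\<bar> \<le> K1 * M2 * \<bar>u - u'\<bar> + D1 * D2 * \<bar>v - v'\<bar>"
  using smooth_bounded_mult_deriv_lipschitz[OF f2 f1, of v u v' u'] by (simp add: algebra_simps)

section \<open>The chain function\<close>

text \<open>A variant of the hard function of Carmon, Duchi, Hinder and Sidford:
  \<open>F x = \<Sum>i<T. \<psi>(-y\<^sub>i) \<phi>(-x\<^sub>i) - \<psi>(y\<^sub>i) \<phi>(x\<^sub>i)\<close> with \<open>y\<^sub>0 = \<lambda>\<close> and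
  \<open>y\<^sub>i = x\<^sub>i\<^sub>-\<^sub>1\<close>. Coordinate \<open>k\<close> of the gradient only involves \<open>x\<^sub>k\<^sub>-\<^sub>1, x\<^sub>k, x\<^sub>k\<^sub>+\<^sub>1\<close>,
  and it vanishes once \<open>x\<^sub>k\<^sub>-\<^sub>1 = x\<^sub>k = 0\<close>, since \<open>\<psi>\<close> and \<open>\<psi>'\<close> vanish at \<open>0\<close>:
  a zero-respecting method discovers at most one new coordinate per gradient.\<close>

definition chain_prev :: "real \<Rightarrow> vecn \<Rightarrow> nat \<Rightarrow> real" where
  "chain_prev lam x i = (if i = 0 then lam else x (i - 1))"

definition chain_fun :: "nat \<Rightarrow> real \<Rightarrow> (real \<Rightarrow> real) \<Rightarrow> (real \<Rightarrow> real) \<Rightarrow> vecn \<Rightarrow> real" where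
  "chain_fun T lam ps ph x =
     (\<Sum>i<T. ps (- chain_prev lam x i) * ph (- x i) - ps (chain_prev lam x i) * ph (x i))"

definition chain_partA :: "real \<Rightarrow> (real \<Rightarrow> real) \<Rightarrow> (real \<Rightarrow> real) \<Rightarrow> vecn \<Rightarrow> nat \<Rightarrow> real" where
  "chain_partA lam ps ph' x j =
     - (ps (- chain_prev lam x j) * ph' (- x j)) - ps (chain_prev lam x j) * ph' (x j)"

definition chain_partB :: "real \<Rightarrow> (real \<Rightarrow> real) \<Rightarrow> (real \<Rightarrow> real) \<Rightarrow> vecn \<Rightarrow> nat \<Rightarrow> real" where
  "chain_partB lam ps' ph x j =
     - (ps' (- chain_prev lam x j) * ph (- x j)) - ps' (chain_prev lam x j) * ph (x j)"

definition chain_grad ::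
  "nat \<Rightarrow> real \<Rightarrow> (real \<Rightarrow> real) \<Rightarrow> (real \<Rightarrow> real) \<Rightarrow> (real \<Rightarrow> real) \<Rightarrow> (real \<Rightarrow> real) \<Rightarrow> vecn \<Rightarrow> vecn"
  where
  "chain_grad T lam ps ps' ph ph' x k =
     (if k < T then chain_partA lam ps ph' x k
        + (if Suc k < T then chain_partB lam ps' ph x (Suc k) else 0) else 0)"

lemma sum_lessThan_shift_prev:
  fixes g :: "nat \<Rightarrow> real"
  shows "(\<Sum>i<T. B i * (if i = 0 then 0 else g (i - 1))) = (\<Sum>k<T. (if Suc k < T then B (Suc k) else 0) * g k)"
proof (cases T)
  case 0 then show ?thesis by simp
next
  case (Suc m)
  have "(\<Sum>i<Suc m. B i * (if i = 0 then 0 else g (i - 1))) = (\<Sum>i<m. B (Suc i) * g i)"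
    by (subst sum.lessThan_Suc_shift) simp
  moreover have "(\<Sum>k<Suc m. (if Suc k < Suc m then B (Suc k) else 0) * g k) = (\<Sum>i<m. B (Suc i) * g i)"
    by (simp add: sum.lessThan_Suc)
  ultimately show ?thesis using Suc by simp
qed

lemma sum_lessThan_prev_le:
  fixes g :: "nat \<Rightarrow> real"
  assumes "\<And>k. g k \<ge> 0"
  shows "(\<Sum>i<T. (if i = 0 then 0 else g (i - 1))) \<le> (\<Sum>k<T. g k)"
proof (cases T)
  case 0 then show ?thesis by simp
next
  case (Suc m)
  have "(\<Sum>i<Suc m. (if i = 0 then 0 else g (i - 1))) = (\<Sum>i<m. g i)"
    by (subst sum.lessThan_Suc_shift) simp
  also have "\<dots> \<le> (\<Sum>i<Suc m. g i)" using assms by (simp add: sum.lessThan_Suc)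
  finally show ?thesis using Suc by simp
qed

lemma sum_lessThan_next_le:
  fixes g :: "nat \<Rightarrow> real"
  assumes "\<And>k. g k \<ge> 0"
  shows "(\<Sum>k<T. (if Suc k < T then g (Suc k) else 0)) \<le> (\<Sum>k<T. g k)"
proof (cases T)
  case 0 then show ?thesis by simp
next
  case (Suc m)
  have "(\<Sum>k<Suc m. (if Suc k < Suc m then g (Suc k) else 0)) = (\<Sum>i<m. g (Suc i))"
    by (simp add: sum.lessThan_Suc)
  also have "\<dots> \<le> (\<Sum>i<Suc m. g i)" using assms by (subst sum.lessThan_Suc_shift) simp
  finally show ?thesis using Suc by simp
qed

lemma square_le_of_abs_le:
  fixes a c u v :: real
  assumes "\<bar>a\<bar> \<le> c * (\<bar>u\<bar> + \<bar>v\<bar>)" "c \<ge> 0"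
  shows "a^2 \<le> 2 * c^2 * (u^2 + v^2)"
proof -
  have "a^2 \<le> (c * (\<bar>u\<bar> + \<bar>v\<bar>))^2" using assms by (metis abs_ge_zero abs_power2 order.trans power_mono power2_abs)
  also have "\<dots> = c^2 * (\<bar>u\<bar> + \<bar>v\<bar>)^2" by (simp add: power_mult_distrib)
  also have "(\<bar>u\<bar> + \<bar>v\<bar>)^2 \<le> 2 * (u^2 + v^2)"
  proof -
    have "0 \<le> (\<bar>u\<bar> - \<bar>v\<bar>)^2" by simp
    then show ?thesis by (simp add: power2_sum power2_diff)
  qed
  then have "c^2 * (\<bar>u\<bar> + \<bar>v\<bar>)^2 \<le> c^2 * (2 * (u^2 + v^2))" by (intro mult_left_mono) auto
  finally show ?thesis by (simp add: algebra_simps)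
qed

locale smooth_chain =
  fixes T :: nat and lam :: real and ps ps' ph ph' :: "real \<Rightarrow> real" and M1 D1 K1 M2 D2 K2 :: real
  assumes ps: "smooth_bounded ps ps' M1 D1 K1" and ph: "smooth_bounded ph ph' M2 D2 K2"
begin

abbreviation "prev \<equiv> chain_prev lam"
abbreviation "F \<equiv> chain_fun T lam ps ph"
abbreviation "partA \<equiv> chain_partA lam ps ph'"
abbreviation "partB \<equiv> chain_partB lam ps' ph"
abbreviation "gradF \<equiv> chain_grad T lam ps ps' ph ph'"

definition "C = K1 * M2 + D1 * D2 + M1 * K2"

lemma bounds_nonneg:
  "K1 \<ge> 0" "M1 \<ge> 0" "D1 \<ge> 0" "K2 \<ge> 0" "M2 \<ge> 0" "D2 \<ge> 0" "C \<ge> 0"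
  using smooth_bounded_nonneg[OF ps] smooth_bounded_nonneg[OF ph] by (auto simp: C_def)

lemma ps_reflect:
  "smooth_bounded (\<lambda>x. ps (- x)) (\<lambda>x. - ps' (- x)) M1 D1 K1" by (rule smooth_bounded_reflect[OF ps])
lemma ph_reflect:
  "smooth_bounded (\<lambda>x. ph (- x)) (\<lambda>x. - ph' (- x)) M2 D2 K2" by (rule smooth_bounded_reflect[OF ph])

lemma summand_taylor:
  "\<bar>(ps (- (y + a)) * ph (- (u + b)) - ps (y + a) * ph (u + b)) - (ps (- y) * ph (- u) - ps y * ph u)
    - (- (ps' (- y) * ph (- u)) - ps' y * ph u) * a - (- (ps (- y) * ph' (- u)) - ps y * ph' u) * b\<bar>
   \<le> 2 * C * (a^2 + b^2)"
proof -
  have t1: "\<bar>ps (- (y + a)) * ph (- (u + b)) - ps (- y) * ph (- u) - (- ps' (- y)) * ph (- u) * a - ps (- y) * (- ph' (- u)) * b\<bar>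
      \<le> C * (a^2 + b^2)"
    using smooth_bounded_mult_taylor[OF ps_reflect ph_reflect, of y a u b] by (simp add: C_def)
  have t2: "\<bar>ps (y + a) * ph (u + b) - ps y * ph u - ps' y * ph u * a - ps y * ph' u * b\<bar> \<le> C * (a^2 + b^2)"
    using smooth_bounded_mult_taylor[OF ps ph, of y a u b] by (simp add: C_def)
  have e: "(ps (- (y + a)) * ph (- (u + b)) - ps (y + a) * ph (u + b)) - (ps (- y) * ph (- u) - ps y * ph u)
    - (- (ps' (- y) * ph (- u)) - ps' y * ph u) * a - (- (ps (- y) * ph' (- u)) - ps y * ph' u) * b
    = (ps (- (y + a)) * ph (- (u + b)) - ps (- y) * ph (- u) - (- ps' (- y)) * ph (- u) * a - ps (- y) * (- ph' (- u)) * b)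
     - (ps (y + a) * ph (u + b) - ps y * ph u - ps' y * ph u * a - ps y * ph' u * b)"
    by (simp add: algebra_simps)
  show ?thesis unfolding e by (rule order.trans[OF abs_triangle_ineq4]) (use t1 t2 in linarith)
qed

lemma chain_fun_taylor:
  "\<bar>F (\<lambda>j. x j + h j) - F x - (\<Sum>k<T. gradF x k * h k)\<bar>
     \<le> 4 * C * (\<Sum>k<T. (h k)^2)"
proof -
  define dy where "dy i = (if i = 0 then 0 else h (i - 1))" for i
  have yvh: "prev (\<lambda>j. x j + h j) i = prev x i + dy i" for i by (simp add: chain_prev_def dy_def)
  have gsum: "(\<Sum>k<T. gradF x k * h k) =
     (\<Sum>i<T. partB x i * dy i + partA x i * h i)"
  proof -
    have "(\<Sum>k<T. gradF x k * h k) =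
       (\<Sum>k<T. partA x k * h k) + (\<Sum>k<T. (if Suc k < T then partB x (Suc k) else 0) * h k)"
      by (simp add: chain_grad_def distrib_right sum.distrib)
    also have "(\<Sum>k<T. (if Suc k < T then partB x (Suc k) else 0) * h k) = (\<Sum>i<T. partB x i * dy i)"
      unfolding dy_def by (rule sum_lessThan_shift_prev[symmetric])
    finally show ?thesis by (simp add: sum.distrib)
  qed
  have "\<bar>F (\<lambda>j. x j + h j) - F x - (\<Sum>k<T. gradF x k * h k)\<bar>
     = \<bar>\<Sum>i<T. ((ps (- (prev x i + dy i)) * ph (- (x i + h i)) - ps (prev x i + dy i) * ph (x i + h i))
          - (ps (- prev x i) * ph (- x i) - ps (prev x i) * ph (x i))
          - partB x i * dy i - partA x i * h i)\<bar>"
    unfolding gsum chain_fun_def yvh by (simp add: sum_subtractf sum.distrib)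
  also have "\<dots> \<le> (\<Sum>i<T. 2 * C * (dy i ^ 2 + h i ^ 2))"
    by (rule order.trans[OF sum_abs sum_mono]) (use summand_taylor in \<open>simp add: chain_partA_def chain_partB_def\<close>)
  also have "\<dots> = 2 * C * ((\<Sum>i<T. dy i ^ 2) + (\<Sum>i<T. h i ^ 2))"
    by (simp add: sum_distrib_left sum.distrib distrib_left)
  also have "\<dots> \<le> 2 * C * ((\<Sum>i<T. h i ^ 2) + (\<Sum>i<T. h i ^ 2))"
  proof -
    have "(\<Sum>i<T. dy i ^ 2) = (\<Sum>i<T. (if i = 0 then 0 else h (i - 1) ^ 2))"
      by (intro sum.cong) (auto simp: dy_def)
    also have "\<dots> \<le> (\<Sum>i<T. h i ^ 2)" by (rule sum_lessThan_prev_le) simp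
    finally show ?thesis using bounds_nonneg by (intro mult_left_mono) auto
  qed
  finally show ?thesis by simp
qed

lemma partA_lipschitz:
  "\<bar>partA x j - partA x' j\<bar> \<le> 2 * C * (\<bar>prev x j - prev x' j\<bar> + \<bar>x j - x' j\<bar>)"
proof -
  let ?y = "prev x j" and ?y' = "prev x' j"
  have a: "\<bar>ps (- ?y) * (- ph' (- x j)) - ps (- ?y') * (- ph' (- x' j))\<bar> \<le> D1 * D2 * \<bar>?y - ?y'\<bar> + M1 * K2 * \<bar>x j - x' j\<bar>"
    using smooth_bounded_mult_deriv_lipschitz[OF ps_reflect ph_reflect, of ?y "x j" ?y' "x' j"] by simp
  have b: "\<bar>ps ?y * ph' (x j) - ps ?y' * ph' (x' j)\<bar> \<le> D1 * D2 * \<bar>?y - ?y'\<bar> + M1 * K2 * \<bar>x j - x' j\<bar>"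
    using smooth_bounded_mult_deriv_lipschitz[OF ps ph, of ?y "x j" ?y' "x' j"] by simp
  have c: "D1 * D2 * \<bar>?y - ?y'\<bar> + M1 * K2 * \<bar>x j - x' j\<bar> \<le> C * (\<bar>?y - ?y'\<bar> + \<bar>x j - x' j\<bar>)"
    using bounds_nonneg unfolding C_def by (simp add: distrib_left mult_right_mono add_mono)
  have "partA x j - partA x' j = (ps (- ?y) * (- ph' (- x j)) - ps (- ?y') * (- ph' (- x' j)))
      - (ps ?y * ph' (x j) - ps ?y' * ph' (x' j))" by (simp add: chain_partA_def algebra_simps)
  then have "\<bar>partA x j - partA x' j\<bar> \<le> \<bar>ps (- ?y) * (- ph' (- x j)) - ps (- ?y') * (- ph' (- x' j))\<bar>
      + \<bar>ps ?y * ph' (x j) - ps ?y' * ph' (x' j)\<bar>" by (simp add: abs_triangle_ineq4)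
  with a b c show ?thesis by linarith
qed

lemma partB_lipschitz:
  "\<bar>partB x j - partB x' j\<bar> \<le> 2 * C * (\<bar>prev x j - prev x' j\<bar> + \<bar>x j - x' j\<bar>)"
proof -
  let ?y = "prev x j" and ?y' = "prev x' j"
  have a: "\<bar>(- ps' (- ?y)) * ph (- x j) - (- ps' (- ?y')) * ph (- x' j)\<bar> \<le> K1 * M2 * \<bar>?y - ?y'\<bar> + D1 * D2 * \<bar>x j - x' j\<bar>"
    using smooth_bounded_deriv_mult_lipschitz[OF ps_reflect ph_reflect, of ?y "x j" ?y' "x' j"] by simp
  have b: "\<bar>ps' ?y * ph (x j) - ps' ?y' * ph (x' j)\<bar> \<le> K1 * M2 * \<bar>?y - ?y'\<bar> + D1 * D2 * \<bar>x j - x' j\<bar>"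
    using smooth_bounded_deriv_mult_lipschitz[OF ps ph, of ?y "x j" ?y' "x' j"] by simp
  have c: "K1 * M2 * \<bar>?y - ?y'\<bar> + D1 * D2 * \<bar>x j - x' j\<bar> \<le> C * (\<bar>?y - ?y'\<bar> + \<bar>x j - x' j\<bar>)"
    using bounds_nonneg unfolding C_def by (simp add: distrib_left mult_right_mono add_mono)
  have "partB x j - partB x' j = ((- ps' (- ?y)) * ph (- x j) - (- ps' (- ?y')) * ph (- x' j))
      - (ps' ?y * ph (x j) - ps' ?y' * ph (x' j))" by (simp add: chain_partB_def algebra_simps)
  then have "\<bar>partB x j - partB x' j\<bar> \<le> \<bar>(- ps' (- ?y)) * ph (- x j) - (- ps' (- ?y')) * ph (- x' j)\<bar>
      + \<bar>ps' ?y * ph (x j) - ps' ?y' * ph (x' j)\<bar>" by (simp add: abs_triangle_ineq4)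
  with a b c show ?thesis by linarith
qed

lemma chain_grad_lipschitz_sq:
  "(\<Sum>k<T. (gradF x k - gradF x' k)^2) \<le> 64 * C^2 * (\<Sum>k<T. (x k - x' k)^2)"
proof -
  define d where "d k = (x k - x' k)^2" for k
  have dy: "prev x k - prev x' k = (if k = 0 then 0 else x (k - 1) - x' (k - 1))" for k by (simp add: chain_prev_def)
  have comp: "(gradF x k - gradF x' k)^2 \<le>
      16 * C^2 * ((if k = 0 then 0 else d (k - 1)) + 2 * d k + (if Suc k < T then d (Suc k) else 0))" if k: "k < T" for k
  proof -
    define a where "a = partA x k - partA x' k"
    define b where "b = (if Suc k < T then partB x (Suc k) - partB x' (Suc k) else 0)"
    have e: "gradF x k - gradF x' k = a + b"
      using k by (simp add: chain_grad_def a_def b_def)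
    have ab: "(a + b)^2 \<le> 2 * a^2 + 2 * b^2"
    proof -
      have "0 \<le> (a - b)^2" by simp
      then show ?thesis by (simp add: power2_sum power2_diff)
    qed
    have "\<bar>a\<bar> \<le> (2 * C) * (\<bar>prev x k - prev x' k\<bar> + \<bar>x k - x' k\<bar>)" unfolding a_def by (rule partA_lipschitz)
    then have a2: "a^2 \<le> 2 * (2 * C)^2 * ((prev x k - prev x' k)^2 + (x k - x' k)^2)"
      by (rule square_le_of_abs_le) (use bounds_nonneg in simp)
    have "(prev x k - prev x' k)^2 = (if k = 0 then 0 else d (k - 1))" by (simp add: dy d_def)
    then have a3: "a^2 \<le> 8 * C^2 * ((if k = 0 then 0 else d (k - 1)) + d k)"
      using a2 by (simp add: d_def power_mult_distrib)
    have b3: "b^2 \<le> 8 * C^2 * (d k + (if Suc k < T then d (Suc k) else 0))"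
    proof (cases "Suc k < T")
      case True
      have "\<bar>b\<bar> \<le> (2 * C) * (\<bar>prev x (Suc k) - prev x' (Suc k)\<bar> + \<bar>x (Suc k) - x' (Suc k)\<bar>)"
        unfolding b_def using True partB_lipschitz by simp
      then have "b^2 \<le> 2 * (2 * C)^2 * ((prev x (Suc k) - prev x' (Suc k))^2 + (x (Suc k) - x' (Suc k))^2)"
        by (rule square_le_of_abs_le) (use bounds_nonneg in simp)
      then show ?thesis using True by (simp add: d_def chain_prev_def power_mult_distrib)
    next
      case False
      have "0 \<le> d k" by (simp add: d_def)
      then show ?thesis using False by (simp add: b_def)
    qed
    have "(a + b)^2 \<le> 2 * (8 * C^2 * ((if k = 0 then 0 else d (k - 1)) + d k)) + 2 * (8 * C^2 * (d k + (if Suc k < T then d (Suc k) else 0)))"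
      using ab a3 b3 by linarith
    then show ?thesis unfolding e by (simp add: algebra_simps)
  qed
  have dn: "0 \<le> d k" for k by (simp add: d_def)
  have "(\<Sum>k<T. (gradF x k - gradF x' k)^2) \<le>
      (\<Sum>k<T. 16 * C^2 * ((if k = 0 then 0 else d (k - 1)) + 2 * d k + (if Suc k < T then d (Suc k) else 0)))"
    by (rule sum_mono) (use comp in auto)
  also have "\<dots> = 16 * C^2 * ((\<Sum>k<T. (if k = 0 then 0 else d (k - 1))) + 2 * (\<Sum>k<T. d k) + (\<Sum>k<T. (if Suc k < T then d (Suc k) else 0)))"
    by (simp add: sum_distrib_left sum.distrib distrib_left)
  also have "\<dots> \<le> 16 * C^2 * ((\<Sum>k<T. d k) + 2 * (\<Sum>k<T. d k) + (\<Sum>k<T. d k))"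
    using sum_lessThan_prev_le[of d T] sum_lessThan_next_le[of d T] dn by (intro mult_left_mono add_mono) auto
  finally show ?thesis by (simp add: d_def)
qed

lemma chain_grad_lipschitz:
  "sqrt (\<Sum>k<T. (gradF x k - gradF x' k)^2) \<le> 8 * C * sqrt (\<Sum>k<T. (x k - x' k)^2)"
proof -
  have "sqrt (\<Sum>k<T. (gradF x k - gradF x' k)^2) \<le> sqrt (64 * C^2 * (\<Sum>k<T. (x k - x' k)^2))"
    using chain_grad_lipschitz_sq by (rule real_sqrt_le_mono)
  also have "\<dots> = 8 * C * sqrt (\<Sum>k<T. (x k - x' k)^2)"
    using bounds_nonneg by (simp add: real_sqrt_mult)
  finally show ?thesis .
qed

lemma chain_grad_large:
  assumes lam: "lam > 0" and T: "0 < T" and xT: "x (T - 1) = 0"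
    and sg: "\<And>z. ps z \<ge> 0" "\<And>z. ps' z \<ge> 0" "\<And>z. ph z \<ge> 0" "\<And>z. ph' z \<ge> 0"
    and big: "\<And>y. y \<ge> lam \<Longrightarrow> ps y \<ge> a0" and big2: "\<And>z. \<bar>z\<bar> < lam \<Longrightarrow> ph' z \<ge> b0"
    and ab: "a0 \<ge> 0" "b0 \<ge> 0"
  shows "(a0 * b0)^2 \<le> (\<Sum>k<T. (gradF x k)^2)"
proof -
  define j where "j = (LEAST j. \<bar>x j\<bar> < lam)"
  have ex: "\<bar>x (T - 1)\<bar> < lam" using xT lam by simp
  have j1: "\<bar>x j\<bar> < lam" unfolding j_def by (rule LeastI[of _ "T - 1"]) (rule ex)
  have jT: "j \<le> T - 1" unfolding j_def by (rule Least_le) (rule ex)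
  then have jT': "j < T" using T by linarith
  have ylam: "\<bar>prev x j\<bar> \<ge> lam"
  proof (cases "j = 0")
    case True then show ?thesis using lam by (simp add: chain_prev_def)
  next
    case False
    then have "j - 1 < j" by simp
    then have "\<not> \<bar>x (j - 1)\<bar> < lam" unfolding j_def by (rule not_less_Least)
    then show ?thesis using False by (simp add: chain_prev_def)
  qed
  let ?y = "prev x j"
  have P: "ps (- ?y) * ph' (- x j) \<ge> 0" "ps ?y * ph' (x j) \<ge> 0" using sg by auto
  have big3: "ps (- ?y) * ph' (- x j) + ps ?y * ph' (x j) \<ge> a0 * b0"
  proof (cases "?y \<ge> lam")
    case True
    have "ps ?y * ph' (x j) \<ge> a0 * b0" using big[OF True] big2[OF j1] ab by (intro mult_mono) auto
    then show ?thesis using P by linarith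
  next
    case False
    then have "- ?y \<ge> lam" using ylam by linarith
    moreover have "\<bar>- x j\<bar> < lam" using j1 by simp
    ultimately have "ps (- ?y) * ph' (- x j) \<ge> a0 * b0" using big big2 ab sg by (intro mult_mono) auto
    then show ?thesis using P by linarith
  qed
  have Bn: "(if Suc j < T then partB x (Suc j) else 0) \<le> 0"
  proof -
    have "0 \<le> ps' (- prev x (Suc j)) * ph (- x (Suc j))" "0 \<le> ps' (prev x (Suc j)) * ph (x (Suc j))"
      using sg by auto
    then show ?thesis by (simp add: chain_partB_def)
  qed
  have "gradF x j \<le> - (a0 * b0)"
    using big3 Bn jT' by (simp add: chain_grad_def chain_partA_def)
  then have "(a0 * b0)^2 \<le> (gradF x j)^2"
  proof -
    have "(a0 * b0)^2 \<le> (- gradF x j)^2"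
      using \<open>gradF x j \<le> - (a0 * b0)\<close> ab by (intro power_mono) auto
    then show ?thesis by simp
  qed
  also have "\<dots> \<le> (\<Sum>k<T. (gradF x k)^2)"
    using jT' by (intro member_le_sum) auto
  finally show ?thesis .
qed

lemma chain_grad_zero_beyond:
  assumes "ps 0 = 0" "ps' 0 = 0" and xz: "\<And>j. j \<ge> P \<Longrightarrow> x j = 0" and k: "k \<ge> Suc P"
  shows "gradF x k = 0"
proof -
  have "prev x k = 0" using k xz by (simp add: chain_prev_def)
  moreover have "x k = 0" using k xz by simp
  moreover have "prev x (Suc k) = 0" using k xz by (simp add: chain_prev_def)
  ultimately show ?thesis using assms by (simp add: chain_grad_def chain_partA_def chain_partB_def)
qed

lemma chain_fun_gap:
  "F (\<lambda>_. 0) - F x \<le> 2 * (real T + 1) * (M1 * M2)"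
proof -
  have bnd: "\<bar>ps a * ph b\<bar> \<le> M1 * M2" for a b
    using ps ph bounds_nonneg unfolding abs_mult smooth_bounded_def by (intro mult_mono) auto
  have t: "\<bar>ps (- u) * ph (- v) - ps u * ph v\<bar> \<le> 2 * (M1 * M2)" for u v
    using bnd[of "-u" "-v"] bnd[of u v] by (smt (verit) abs_triangle_ineq4)
  have F0: "F (\<lambda>_. 0) \<le> 2 * (M1 * M2)"
  proof (cases T)
    case 0 then show ?thesis using bounds_nonneg by (simp add: chain_fun_def)
  next
    case (Suc m)
    have "F (\<lambda>_. 0) = ps (- lam) * ph (- 0) - ps lam * ph 0"
      unfolding chain_fun_def Suc by (subst sum.lessThan_Suc_shift) (simp add: chain_prev_def)
    then show ?thesis using t[of lam 0] by simp
  qed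
  have "- F x \<le> (\<Sum>i<T. 2 * (M1 * M2))"
    unfolding chain_fun_def sum_negf[symmetric] by (rule sum_mono) (use t in \<open>smt (verit)\<close>)
  then have "- F x \<le> 2 * real T * (M1 * M2)" by simp
  with F0 show ?thesis by (simp add: algebra_simps)
qed

lemma chain_grad_bounded: "\<bar>gradF x k\<bar> \<le> 2 * (M1 * D2) + 2 * (D1 * M2)"
proof -
  have b1: "\<bar>ps a * ph' b\<bar> \<le> M1 * D2" for a b
    using ps ph bounds_nonneg unfolding abs_mult smooth_bounded_def by (intro mult_mono) auto
  have b2: "\<bar>ps' a * ph b\<bar> \<le> D1 * M2" for a b
    using ps ph bounds_nonneg unfolding abs_mult smooth_bounded_def by (intro mult_mono) auto
  have A: "\<bar>partA x k\<bar> \<le> 2 * (M1 * D2)"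
    using b1[of "- prev x k" "- x k"] b1[of "prev x k" "x k"] unfolding chain_partA_def by linarith
  have B: "\<bar>partB x (Suc k)\<bar> \<le> 2 * (D1 * M2)"
    using b2[of "- prev x (Suc k)" "- x (Suc k)"] b2[of "prev x (Suc k)" "x (Suc k)"] unfolding chain_partB_def by linarith
  show ?thesis using A B bounds_nonneg by (auto simp: chain_grad_def)
qed

end

section \<open>The hard instance\<close>

definition psi :: "real \<Rightarrow> real \<Rightarrow> real" where "psi lam x = smooth_step (x / lam)"
definition dpsi :: "real \<Rightarrow> real \<Rightarrow> real" where "dpsi lam x = smooth_step_deriv (x / lam) / lam"
definition phi :: "real \<Rightarrow> real \<Rightarrow> real \<Rightarrow> real" where
  "phi lam beta x = beta * smooth_step (x / (4 * lam) + 1/2)"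
definition dphi :: "real \<Rightarrow> real \<Rightarrow> real \<Rightarrow> real" where
  "dphi lam beta x = beta / (4 * lam) * smooth_step_deriv (x / (4 * lam) + 1/2)"

lemma smooth_bounded_psi:
  "lam > 0 \<Longrightarrow> smooth_bounded (psi lam) (dpsi lam) 1 (2 / lam) (4 / lam^2)"
  using smooth_bounded_rescale[OF smooth_bounded_smooth_step, of lam 1 0]
  by (simp add: psi_def[abs_def] dpsi_def[abs_def])

lemma smooth_bounded_phi:
  "lam > 0 \<Longrightarrow> beta \<ge> 0 \<Longrightarrow>
     smooth_bounded (phi lam beta) (dphi lam beta) beta (beta / (2 * lam)) (beta / (4 * lam^2))"
  using smooth_bounded_rescale[OF smooth_bounded_smooth_step, of "4 * lam" beta "1/2"]
  by (simp add: phi_def[abs_def] dphi_def[abs_def] power2_eq_square)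

text \<open>With these scalings the constant \<open>C\<close> of \<open>smooth_chain\<close> is \<open>21 \<beta> / (4 \<lambda>\<^sup>2)\<close>, so
  the gradient is \<open>42 \<beta> / \<lambda>\<^sup>2\<close>-Lipschitz; choosing \<open>\<beta> = g \<lambda>\<close> and \<open>\<lambda> = 42 g / L\<close> makes it
  \<open>L\<close>-Lipschitz with gradients of size about \<open>g\<close> away from stationarity.\<close>

definition hard_lam :: "real \<Rightarrow> real \<Rightarrow> real" where "hard_lam L g = 42 * g / L"
definition hard_beta :: "real \<Rightarrow> real \<Rightarrow> real" where "hard_beta L g = g * hard_lam L g"

definition hard_fun :: "nat \<Rightarrow> real \<Rightarrow> real \<Rightarrow> vecn \<Rightarrow> real" where
  "hard_fun T L g = chain_fun T (hard_lam L g) (psi (hard_lam L g)) (phi (hard_lam L g) (hard_beta L g))"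

definition hard_grad :: "nat \<Rightarrow> real \<Rightarrow> real \<Rightarrow> vecn \<Rightarrow> vecn" where
  "hard_grad T L g = chain_grad T (hard_lam L g) (psi (hard_lam L g)) (dpsi (hard_lam L g))
     (phi (hard_lam L g) (hard_beta L g)) (dphi (hard_lam L g) (hard_beta L g))"

lemma normd_squared: "(normd d x)^2 = (\<Sum>j<d. (x j)^2)"
  by (simp add: normd_def sum_nonneg)

locale hard_instance =
  fixes T :: nat and L g :: real
  assumes L: "L > 0" and g: "g > 0"
begin

abbreviation "lam \<equiv> hard_lam L g"
abbreviation "beta \<equiv> hard_beta L g"

lemma lam_pos: "lam > 0" using L g by (simp add: hard_lam_def)
lemma beta_pos: "beta > 0" using lam_pos g by (simp add: hard_beta_def)

sublocale ch: smooth_chain T lam "psi lam" "dpsi lam" "phi lam beta" "dphi lam beta"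
  1 "2 / lam" "4 / lam^2" beta "beta / (2 * lam)" "beta / (4 * lam^2)"
  by unfold_locales (use smooth_bounded_psi smooth_bounded_phi lam_pos beta_pos in auto)

lemma eight_C_eq: "8 * ch.C = L"
proof -
  have "8 * ch.C = 42 * beta / lam^2"
    unfolding ch.C_def using lam_pos by (simp add: field_simps power2_eq_square)
  also have "\<dots> = L" using lam_pos g L by (simp add: hard_beta_def hard_lam_def power2_eq_square field_simps)
  finally show ?thesis .
qed

lemma hard_grad_in_vecd: "hard_grad T L g x \<in> vecd T"
  by (simp add: vecd_def hard_grad_def chain_grad_def)

lemma hard_has_grad: "has_grad T (hard_fun T L g) (hard_grad T L g x) x"
  unfolding has_grad_def
proof (intro allI impI)
  fix e :: real assume e: "e > 0"
  define K where "K = 4 * ch.C + 1"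
  have K: "K > 0" using ch.bounds_nonneg by (simp add: K_def)
  show "\<exists>\<delta>>0. \<forall>h\<in>vecd T. normd T h < \<delta> \<longrightarrow>
          \<bar>hard_fun T L g (\<lambda>j. x j + h j) - hard_fun T L g x - (\<Sum>j<T. hard_grad T L g x j * h j)\<bar>
            \<le> e * normd T h"
  proof (intro exI[of _ "e / K"] conjI ballI impI)
    show "e / K > 0" using e K by simp
    fix h assume h: "h \<in> vecd T" "normd T h < e / K"
    have nh: "normd T h \<ge> 0" by (simp add: normd_def sum_nonneg)
    have "\<bar>hard_fun T L g (\<lambda>j. x j + h j) - hard_fun T L g x - (\<Sum>j<T. hard_grad T L g x j * h j)\<bar>
        \<le> 4 * ch.C * (\<Sum>k<T. (h k)^2)"
      unfolding hard_fun_def hard_grad_def by (rule ch.chain_fun_taylor)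
    also have "\<dots> = 4 * ch.C * (normd T h)^2" by (simp add: normd_squared)
    also have "\<dots> \<le> (K * normd T h) * normd T h"
      using nh mult_right_mono[of "4 * ch.C" K "(normd T h)^2"] by (simp add: K_def power2_eq_square)
    also have "\<dots> \<le> e * normd T h"
      using h(2) K nh by (intro mult_right_mono) (simp_all add: field_simps)
    finally show "\<bar>hard_fun T L g (\<lambda>j. x j + h j) - hard_fun T L g x - (\<Sum>j<T. hard_grad T L g x j * h j)\<bar>
        \<le> e * normd T h" .
  qed
qed

lemma hard_grad_lipschitz:
  "normd T (\<lambda>j. hard_grad T L g x j - hard_grad T L g y j) \<le> L * normd T (\<lambda>j. x j - y j)"
  using ch.chain_grad_lipschitz[of x y] eight_C_eq by (simp add: normd_def hard_grad_def)

lemma hard_fun_gap: "hard_fun T L g (\<lambda>_. 0) - hard_fun T L g x \<le> 2 * (real T + 1) * beta"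
  using ch.chain_fun_gap[of x] by (simp add: hard_fun_def)

lemma hard_in_FDL:
  "2 * (real T + 1) * beta \<le> Delta \<Longrightarrow> in_FDL T Delta L (hard_fun T L g) (hard_grad T L g)"
  unfolding in_FDL_def
  using hard_grad_in_vecd hard_has_grad hard_grad_lipschitz hard_fun_gap by (meson order.trans)

lemma hard_grad_large:
  assumes "0 < T" and "x (T - 1) = 0"
  shows "(g / 4)^2 \<le> (normd T (hard_grad T L g x))^2"
proof -
  have "(1 * (beta / (4 * lam)))^2 \<le> (\<Sum>k<T. (hard_grad T L g x k)^2)"
    unfolding hard_grad_def
  proof (rule ch.chain_grad_large[where x=x, OF lam_pos assms])
    show "psi lam z \<ge> 0" "dpsi lam z \<ge> 0" "phi lam beta z \<ge> 0" "dphi lam beta z \<ge> 0" for z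
      using smooth_step_bounds smooth_step_deriv_bounds lam_pos beta_pos
      by (auto simp: psi_def dpsi_def phi_def dphi_def)
    show "psi lam y \<ge> 1" if "y \<ge> lam" for y
      using that lam_pos by (simp add: psi_def smooth_step_ge_1)
    show "dphi lam beta z \<ge> beta / (4 * lam)" if "\<bar>z\<bar> < lam" for z
    proof -
      have "1/4 < z / (4 * lam) + 1/2" "z / (4 * lam) + 1/2 < 3/4"
        using that lam_pos by (auto simp: field_simps abs_less_iff)
      then have "smooth_step_deriv (z / (4 * lam) + 1/2) \<ge> 1" by (rule smooth_step_deriv_middle)
      then show ?thesis
        using lam_pos beta_pos mult_left_mono[of 1 _ "beta / (4 * lam)"] by (simp add: dphi_def)
    qed
  qed (use lam_pos beta_pos in auto)
  moreover have "beta / (4 * lam) = g / 4" using lam_pos by (simp add: hard_beta_def)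
  ultimately show ?thesis by (simp add: normd_squared)
qed

lemma hard_grad_bounded: "\<bar>hard_grad T L g x k\<bar> \<le> 5 * g"
proof -
  have "\<bar>hard_grad T L g x k\<bar> \<le> 2 * (1 * (beta / (2 * lam))) + 2 * (2 / lam * beta)"
    unfolding hard_grad_def by (rule ch.chain_grad_bounded)
  also have "\<dots> = 5 * g" using lam_pos by (simp add: hard_beta_def field_simps)
  finally show ?thesis .
qed

lemma hard_grad_zero_beyond:
  "(\<And>j. j \<ge> P \<Longrightarrow> x j = 0) \<Longrightarrow> k \<ge> Suc P \<Longrightarrow> hard_grad T L g x k = 0"
  unfolding hard_grad_def by (rule ch.chain_grad_zero_beyond) (auto simp: psi_def dpsi_def smooth_step_0)

end

section \<open>Runs of the protocol\<close>

definition supported_below :: "vecn \<Rightarrow> nat \<Rightarrow> bool" where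
  "supported_below x P \<longleftrightarrow> (\<forall>j\<ge>P. x j = 0)"

lemma supported_below_mono:
  "supported_below x M \<Longrightarrow> M \<le> M' \<Longrightarrow> supported_below x M'"
  by (auto simp: supported_below_def)

lemma zero_in_vecd: "(\<lambda>_. 0) \<in> vecd d"
  by (simp add: vecd_def)

lemma delayed_oracle_simps:
  "delayed_oracle tau G t x (st, sx, False) xi = ((t, x, True), (\<lambda>_. 0))"
  "t < st + tau \<Longrightarrow> delayed_oracle tau G t x (st, sx, True) xi = ((st, sx, True), (\<lambda>_. 0))"
  "\<not> t < st + tau \<Longrightarrow> delayed_oracle tau G t x (st, sx, True) xi = ((0, (\<lambda>_. 0), False), G sx xi)"
  by (simp_all add: delayed_oracle_def)

locale protocol =
  fixes n d :: nat and A :: algo and tau :: "nat \<Rightarrow> real" and G :: "vecn \<Rightarrow> real \<Rightarrow> vecn"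
  assumes alg: "is_algorithm n d A" and zr: "zero_respecting d A"
    and Gv: "\<And>x xi. x \<in> vecd d \<Longrightarrow> G x xi \<in> vecd d"
begin

abbreviation "run \<omega> k \<equiv> protocol_run A tau G \<omega> k"
abbreviation "hist \<omega> k \<equiv> fst (run \<omega> k)"
abbreviation "states \<omega> k \<equiv> snd (run \<omega> k)"

lemma run_Suc:
  assumes "A (hist \<omega> k) = (t, i, x)" "delayed_oracle (tau i) G t x (states \<omega> k i) (\<omega> (i, Suc k)) = (s', g)"
  shows "run \<omega> (Suc k) = (hist \<omega> k @ [g], (states \<omega> k)(i := s'))"
  using assms by (simp add: case_prod_beta)

lemma algo_output:
  "set gs \<subseteq> vecd d \<Longrightarrow> fst (A gs) \<ge> 0 \<and> fst (snd (A gs)) \<in> {1..n} \<and> snd (snd (A gs)) \<in> vecd d"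
  using alg unfolding is_algorithm_def by blast

lemma algo_time_mono:
  "set gs \<subseteq> vecd d \<Longrightarrow> g \<in> vecd d \<Longrightarrow> fst (A (gs @ [g])) \<ge> fst (A gs)"
  using alg unfolding is_algorithm_def by blast

lemma run_in_vecd: "set (hist \<omega> k) \<subseteq> vecd d \<and> length (hist \<omega> k) = k \<and>
    (\<forall>i. snd (snd (states \<omega> k i)) \<longrightarrow> fst (snd (states \<omega> k i)) \<in> vecd d)"
proof (induction k)
  case 0 then show ?case by simp
next
  case (Suc k)
  let ?gs = "hist \<omega> k" and ?s = "states \<omega> k"
  obtain t i x where Ax: "A ?gs = (t, i, x)" by (cases "A ?gs") auto
  have x: "x \<in> vecd d" using algo_output[of ?gs] Suc Ax by auto
  obtain st sx sq where s: "?s i = (st, sx, sq)" by (cases "?s i") auto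
  have sx: "sq \<Longrightarrow> sx \<in> vecd d" using Suc s by (metis fst_conv snd_conv)
  obtain s' g where D: "delayed_oracle (tau i) G t x (?s i) (\<omega> (i, Suc k)) = (s', g)" by (cases "delayed_oracle (tau i) G t x (?s i) (\<omega> (i, Suc k))") auto
  have P: "run \<omega> (Suc k) = (?gs @ [g], ?s(i := s'))" by (rule run_Suc[OF Ax D])
  have gs': "g \<in> vecd d \<and> (snd (snd s') \<longrightarrow> fst (snd s') \<in> vecd d)"
  proof (cases sq)
    case False
    then show ?thesis using D x s by (auto simp: delayed_oracle_simps zero_in_vecd)
  next
    case True
    then show ?thesis using D x sx Gv by (cases "t < st + tau i") (auto simp: delayed_oracle_simps zero_in_vecd s)
  qed
  show ?case using Suc gs' unfolding P by (auto simp del: protocol_run.simps)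
qed

lemma proto_time_le_Suc: "proto_time A tau G \<omega> k \<le> proto_time A tau G \<omega> (Suc k)"
proof (cases k)
  case 0 then show ?thesis using algo_output[of "[]"] by (simp add: proto_time_def grads_def)
next
  case (Suc m)
  have "set (hist \<omega> m) \<subseteq> vecd d" using run_in_vecd by blast
  moreover have "set (hist \<omega> (Suc m)) \<subseteq> vecd d" using run_in_vecd by blast
  moreover obtain g where "hist \<omega> (Suc m) = hist \<omega> m @ [g]"
    by (simp add: case_prod_beta)
  ultimately have "fst (A (hist \<omega> m)) \<le> fst (A (hist \<omega> (Suc m)))"
    by (auto intro!: algo_time_mono simp del: protocol_run.simps)
  then show ?thesis using Suc by (simp add: proto_time_def grads_def)
qed

lemma proto_time_mono:
  "j \<le> k \<Longrightarrow> proto_time A tau G \<omega> j \<le> proto_time A tau G \<omega> k"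
  by (induction k) (auto intro: order.trans[OF _ proto_time_le_Suc] simp: le_Suc_eq)

lemma proto_time_Suc: "proto_time A tau G \<omega> (Suc k) = fst (A (hist \<omega> k))"
  by (simp add: proto_time_def grads_def)

definition completes :: "(nat \<times> nat \<Rightarrow> real) \<Rightarrow> nat \<Rightarrow> nat \<Rightarrow> bool" where
  "completes \<omega> i k' = (case k' of 0 \<Rightarrow> False | Suc k \<Rightarrow>
     fst (snd (A (hist \<omega> k))) = i \<and> snd (snd (states \<omega> k i)) \<and> \<not> fst (A (hist \<omega> k)) < fst (states \<omega> k i) + tau i)"

definition completions :: "(nat \<times> nat \<Rightarrow> real) \<Rightarrow> nat \<Rightarrow> nat \<Rightarrow> nat" where
  "completions \<omega> i k = (\<Sum>j\<in>{1..k}. if completes \<omega> i j then 1 else 0)"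

lemma completions_Suc:
  "completions \<omega> i (Suc k) = completions \<omega> i k + (if completes \<omega> i (Suc k) then 1 else 0)"
  by (simp add: completions_def)

lemma algo_point_supported_below:
  "set gs \<subseteq> vecd d \<Longrightarrow> (\<forall>g\<in>set gs. supported_below g M) \<Longrightarrow> supported_below (snd (snd (A gs))) M"
  using zr unfolding zero_respecting_def supported_below_def by (metis)

lemma completions_invariant:
  "real (completions \<omega> i k) * tau i \<le> (if snd (snd (states \<omega> k i)) then fst (states \<omega> k i) else proto_time A tau G \<omega> k)
   \<and> (snd (snd (states \<omega> k i)) \<longrightarrow> fst (states \<omega> k i) \<le> proto_time A tau G \<omega> k)"
proof (induction k arbitrary: i)
  case 0 then show ?case by (simp add: completions_def proto_time_def)
next
  case (Suc k)
  let ?gs = "hist \<omega> k" and ?s = "states \<omega> k"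
  obtain t i0 x where Ax: "A ?gs = (t, i0, x)" by (cases "A ?gs") auto
  obtain st sx sq where s: "?s i0 = (st, sx, sq)" by (cases "?s i0") auto
  obtain s' g where D: "delayed_oracle (tau i0) G t x (?s i0) (\<omega> (i0, Suc k)) = (s', g)" by (cases "delayed_oracle (tau i0) G t x (?s i0) (\<omega> (i0, Suc k))") auto
  have P: "run \<omega> (Suc k) = (?gs @ [g], ?s(i0 := s'))" by (rule run_Suc[OF Ax D])
  have tS: "proto_time A tau G \<omega> (Suc k) = t" using proto_time_Suc[of \<omega> k] Ax by simp
  have tk: "proto_time A tau G \<omega> k \<le> t" using proto_time_le_Suc[of \<omega> k] tS by simp
  have cS: "completes \<omega> i (Suc k) \<longleftrightarrow> i = i0 \<and> sq \<and> \<not> t < st + tau i0" using s Ax by (auto simp: completes_def)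
  show ?case
  proof (cases "i = i0")
    case False
    then have "states \<omega> (Suc k) i = ?s i" "\<not> completes \<omega> i (Suc k)" using P cS by auto
    then show ?thesis using Suc.IH[of i] tS tk by (auto simp: completions_Suc)
  next
    case True
    note IH = Suc.IH[of i0]
    show ?thesis
    proof (cases sq)
      case False
      then have "s' = (t, x, True)" "\<not> completes \<omega> i (Suc k)" using D s cS by (auto simp: delayed_oracle_simps)
      then show ?thesis using IH True P s False tS tk by (auto simp: completions_Suc)
    next
      case sq: True
      show ?thesis
      proof (cases "t < st + tau i0")
        case True
        then have "s' = (st, sx, True)" "\<not> completes \<omega> i (Suc k)" using D s cS sq by (auto simp: delayed_oracle_simps)
        then show ?thesis using IH \<open>i = i0\<close> P s sq tS tk by (auto simp: completions_Suc)
      next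
        case False
        then have "s' = (0, (\<lambda>_. 0), False)" "completes \<omega> i (Suc k)" using D s cS sq \<open>i = i0\<close> by (auto simp: delayed_oracle_simps)
        then show ?thesis using IH \<open>i = i0\<close> P s sq tS False by (auto simp: completions_Suc algebra_simps)
      qed
    qed
  qed
qed

lemma completions_time: "real (completions \<omega> i k) * tau i \<le> proto_time A tau G \<omega> k"
  using completions_invariant[of \<omega> i k] by (auto split: if_splits)

end

text \<open>A completed job can only reveal a new coordinate if its point already reached the
  current level: a fast oracle (in \<open>Fs\<close>) additionally needs its coin to show \<open>1\<close>, while a
  slow one spends a full delay \<open>\<ge> \<theta>\<close> on a job started after the previous discovery.\<close>

locale progress_bound = protocol +
  fixes Fs :: "nat set" and \<theta> :: real
  assumes slow: "\<And>i. i \<in> {1..n} \<Longrightarrow> i \<notin> Fs \<Longrightarrow> tau i \<ge> \<theta>"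
    and G_supported_Suc: "\<And>x P xi. x \<in> vecd d \<Longrightarrow> supported_below x P \<Longrightarrow> supported_below (G x xi) (Suc P)"
    and G_supported: "\<And>x P xi. x \<in> vecd d \<Longrightarrow> supported_below x P \<Longrightarrow> xi \<noteq> 1 \<Longrightarrow> supported_below (G x xi) P"
begin

definition fast_success :: "(nat \<times> nat \<Rightarrow> real) \<Rightarrow> nat \<Rightarrow> bool" where
  "fast_success \<omega> j = (\<exists>i\<in>Fs. completes \<omega> i j \<and> \<omega> (i, j) = 1)"

definition fast_successes :: "(nat \<times> nat \<Rightarrow> real) \<Rightarrow> nat \<Rightarrow> nat" where
  "fast_successes \<omega> k = (\<Sum>j\<in>{1..k}. if fast_success \<omega> j then 1 else 0)"

lemma fast_successes_Suc:
  "fast_successes \<omega> (Suc k) = fast_successes \<omega> k + (if fast_success \<omega> (Suc k) then 1 else 0)"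
  by (simp add: fast_successes_def)

text \<open>\<open>M\<close> bounds the support of everything seen so far, \<open>sc\<close> counts the slow discoveries,
  which end no earlier than \<open>R\<close>; a busy oracle can only advance the level \<open>M\<close> if its job
  started at time \<open>\<ge> R\<close>.\<close>

definition progress_inv :: "(nat \<times> nat \<Rightarrow> real) \<Rightarrow> nat \<Rightarrow> nat \<Rightarrow> real \<Rightarrow> nat \<Rightarrow> bool" where
  "progress_inv \<omega> k M R sc \<longleftrightarrow>
     (\<forall>g\<in>set (hist \<omega> k). supported_below g M) \<and> M \<le> fast_successes \<omega> k + sc \<and>
     real sc * \<theta> \<le> R \<and> R \<le> proto_time A tau G \<omega> k \<and>
     (\<forall>i. snd (snd (states \<omega> k i)) \<longrightarrow> supported_below (fst (snd (states \<omega> k i))) M \<and>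
          ((\<exists>M'<M. supported_below (fst (snd (states \<omega> k i))) M') \<or> R \<le> fst (states \<omega> k i)))"

lemma progress_inv_keep:
  assumes I: "progress_inv \<omega> k M R sc"
    and Ax: "A (hist \<omega> k) = (t, i0, x)"
    and D: "delayed_oracle (tau i0) G t x (states \<omega> k i0) (\<omega> (i0, Suc k)) = (s', g)"
    and g: "supported_below g M"
    and s': "snd (snd s') \<Longrightarrow> supported_below (fst (snd s')) M \<and>
               ((\<exists>M'<M. supported_below (fst (snd s')) M') \<or> R \<le> fst s')"
  shows "progress_inv \<omega> (Suc k) M R sc"
proof -
  have "proto_time A tau G \<omega> k \<le> proto_time A tau G \<omega> (Suc k)" by (rule proto_time_le_Suc)
  then show ?thesis
    using I g s' run_Suc[OF Ax D]
    by (auto simp: progress_inv_def fast_successes_Suc simp del: protocol_run.simps)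
qed

lemma progress_inv_advance:
  assumes I: "progress_inv \<omega> k M R sc"
    and Ax: "A (hist \<omega> k) = (t, i0, x)"
    and s: "states \<omega> k i0 = (st, sx, True)" and elapsed: "\<not> t < st + tau i0"
    and coin: "\<omega> (i0, Suc k) = 1" and Rst: "R \<le> st"
  shows "\<exists>R' sc'. progress_inv \<omega> (Suc k) (Suc M) R' sc'"
proof -
  let ?s = "states \<omega> k"
  have D: "delayed_oracle (tau i0) G t x (?s i0) (\<omega> (i0, Suc k)) = ((0, \<lambda>_. 0, False), G sx 1)"
    using s elapsed coin by (simp add: delayed_oracle_simps)
  have gsS: "hist \<omega> (Suc k) = hist \<omega> k @ [G sx 1]" "states \<omega> (Suc k) = ?s(i0 := (0, \<lambda>_. 0, False))"
    using run_Suc[OF Ax D] by auto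
  have tS: "proto_time A tau G \<omega> (Suc k) = t" using proto_time_Suc[of \<omega> k] Ax by simp
  have tk: "proto_time A tau G \<omega> k \<le> t" using proto_time_le_Suc[of \<omega> k] tS by simp
  have hv: "set (hist \<omega> k) \<subseteq> vecd d" and busy_vecd: "snd (snd (?s i0)) \<longrightarrow> fst (snd (?s i0)) \<in> vecd d"
    using run_in_vecd by blast+
  then have sxv: "sx \<in> vecd d" using s by simp
  have i0: "i0 \<in> {1..n}" using algo_output[OF hv] Ax by simp
  have Iu: "\<forall>g\<in>set (hist \<omega> k). supported_below g M" "M \<le> fast_successes \<omega> k + sc"
    "real sc * \<theta> \<le> R" "\<And>i. snd (snd (?s i)) \<Longrightarrow> supported_below (fst (snd (?s i))) M"
    using I unfolding progress_inv_def by blast+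
  have "supported_below (G sx 1) (Suc M)" using G_supported_Suc[OF sxv] Iu(4)[of i0] s by simp
  then have hist_ok: "\<forall>g\<in>set (hist \<omega> (Suc k)). supported_below g (Suc M)"
    using Iu(1) gsS by (auto intro: supported_below_mono simp del: protocol_run.simps)
  have busy_ok: "supported_below (fst (snd (states \<omega> (Suc k) i))) (Suc M) \<and>
      (\<exists>M'<Suc M. supported_below (fst (snd (states \<omega> (Suc k) i))) M')"
    if "snd (snd (states \<omega> (Suc k) i))" for i
    using that Iu(4)[of i] gsS supported_below_mono[of _ M "Suc M"] by (auto split: if_splits)
  have fsm: "fast_successes \<omega> k \<le> fast_successes \<omega> (Suc k)" by (simp add: fast_successes_Suc)
  show ?thesis
  proof (cases "i0 \<in> Fs")
    case True
    then have "fast_success \<omega> (Suc k)"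
      using s elapsed coin Ax by (auto simp: fast_success_def completes_def)
    then have "progress_inv \<omega> (Suc k) (Suc M) R sc"
      unfolding progress_inv_def using hist_ok busy_ok Iu(2,3) I tk tS
      by (auto simp: fast_successes_Suc progress_inv_def simp del: protocol_run.simps)
    then show ?thesis by blast
  next
    case False
    then have "\<theta> \<le> tau i0" using slow i0 by blast
    then have "real (Suc sc) * \<theta> \<le> t" using Iu(3) Rst elapsed by (simp add: algebra_simps)
    then have "progress_inv \<omega> (Suc k) (Suc M) t (Suc sc)"
      unfolding progress_inv_def using hist_ok busy_ok fsm Iu(2) tS by auto
    then show ?thesis by blast
  qed
qed

lemma progress_inv_Suc:
  assumes I: "progress_inv \<omega> k M R sc"
  shows "\<exists>M' R' sc'. progress_inv \<omega> (Suc k) M' R' sc'"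
proof -
  let ?s = "states \<omega> k"
  obtain t i0 x where Ax: "A (hist \<omega> k) = (t, i0, x)" by (cases "A (hist \<omega> k)") auto
  obtain st sx sq where s: "?s i0 = (st, sx, sq)" by (cases "?s i0") auto
  obtain s' g where D: "delayed_oracle (tau i0) G t x (?s i0) (\<omega> (i0, Suc k)) = (s', g)"
    by (cases "delayed_oracle (tau i0) G t x (?s i0) (\<omega> (i0, Suc k))") auto
  note keep = progress_inv_keep[OF I Ax D]
  have hv: "set (hist \<omega> k) \<subseteq> vecd d" using run_in_vecd by blast
  have Iu: "R \<le> proto_time A tau G \<omega> k"
    "\<And>i. snd (snd (?s i)) \<Longrightarrow> supported_below (fst (snd (?s i))) M \<and>
       ((\<exists>M'<M. supported_below (fst (snd (?s i))) M') \<or> R \<le> fst (?s i))"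
    using I unfolding progress_inv_def by blast+
  have "R \<le> t" using Iu(1) proto_time_le_Suc[of \<omega> k] proto_time_Suc[of \<omega> k] Ax by simp
  moreover have "supported_below x M"
    using algo_point_supported_below[OF hv] I Ax unfolding progress_inv_def by (metis snd_conv)
  moreover have zero: "supported_below (\<lambda>_. 0) M" by (simp add: supported_below_def)
  ultimately have idle: "progress_inv \<omega> (Suc k) M R sc" if "\<not> sq"
    using D s that keep by (auto simp: delayed_oracle_simps)
  have "snd (snd (?s i0)) \<longrightarrow> fst (snd (?s i0)) \<in> vecd d" using run_in_vecd by blast
  then have sxv: "sq \<Longrightarrow> sx \<in> vecd d" using s by simp
  have sxM: "sq \<Longrightarrow> supported_below sx M \<and> ((\<exists>M'<M. supported_below sx M') \<or> R \<le> st)"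
    using Iu(2)[of i0] s by auto
  show ?thesis
  proof (cases "sq \<and> \<not> t < st + tau i0")
    case waiting: False
    show ?thesis
    proof (cases sq)
      case False
      then show ?thesis using idle by blast
    next
      case True
      then have "s' = (st, sx, True)" "g = (\<lambda>_. 0)"
        using waiting D s by (auto simp: delayed_oracle_simps)
      then have "progress_inv \<omega> (Suc k) M R sc" using keep sxM True zero by auto
      then show ?thesis by blast
    qed
  next
    case True
    then have g: "g = G sx (\<omega> (i0, Suc k))" "\<not> snd (snd s')"
      using D s by (auto simp: delayed_oracle_simps)
    consider (lower) M' where "M' < M" "supported_below sx M'" | (coin0) "\<omega> (i0, Suc k) \<noteq> 1"
      | (advance) "\<omega> (i0, Suc k) = 1" "R \<le> st"
      using True sxM by blast
    then show ?thesis
    proof cases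
      case lower
      then have "supported_below g M"
        using G_supported_Suc[OF sxv] g True supported_below_mono[of g "Suc M'" M] by auto
      then show ?thesis using keep g by blast
    next
      case coin0
      then show ?thesis using keep g G_supported[OF sxv] sxM True by blast
    next
      case advance
      then have "\<exists>R' sc'. progress_inv \<omega> (Suc k) (Suc M) R' sc'"
        using progress_inv_advance[OF I Ax, of st sx] s True by simp
      then show ?thesis by blast
    qed
  qed
qed

lemma progress_inv_exists: "\<exists>M R sc. progress_inv \<omega> k M R sc"
proof (induction k)
  case 0
  then show ?case by (intro exI[of _ 0]) (simp add: progress_inv_def fast_successes_def proto_time_def)
next
  case (Suc k)
  then show ?case using progress_inv_Suc by blast
qed

end

section \<open>Bernoulli coins\<close>

definition bernoulli01 :: "real \<Rightarrow> real measure" where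
  "bernoulli01 p = measure_pmf (map_pmf (\<lambda>b. if b then 1 else 0) (bernoulli_pmf p))"

abbreviation coins :: "real \<Rightarrow> (nat \<times> nat \<Rightarrow> real) measure" where
  "coins p \<equiv> PiM UNIV (\<lambda>q. bernoulli01 p)"

lemma sample_measure_bernoulli01: "sample_measure (\<lambda>_. bernoulli01 p) = coins p"
  by (simp add: sample_measure_def)

lemma prob_space_bernoulli01: "prob_space (bernoulli01 p)"
  by (simp add: bernoulli01_def measure_pmf.prob_space_axioms)

lemma space_coins: "space (coins p) = UNIV"
  by (simp add: space_PiM bernoulli01_def)

lemma prob_space_coins: "prob_space (coins p)"
  by (rule prob_space_PiM) (rule prob_space_bernoulli01)

lemma integrable_bernoulli01: "integrable (bernoulli01 p) (f :: real \<Rightarrow> real)"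
  unfolding bernoulli01_def by (rule integrable_measure_pmf_finite) simp

lemma integral_bernoulli01:
  "0 \<le> p \<Longrightarrow> p \<le> 1 \<Longrightarrow> integral\<^sup>L (bernoulli01 p) (f :: real \<Rightarrow> real) = f 1 * p + f 0 * (1 - p)"
  unfolding bernoulli01_def by simp

lemma sets_bernoulli01: "sets (bernoulli01 p) = UNIV" by (simp add: bernoulli01_def)

definition coin_bits :: "(nat \<times> nat) set \<Rightarrow> (nat \<times> nat \<Rightarrow> real) \<Rightarrow> (nat \<times> nat \<Rightarrow> bool)" where
  "coin_bits B \<omega> = restrict (\<lambda>q. \<omega> q = 1) B"

definition bits_coins :: "(nat \<times> nat) set \<Rightarrow> (nat \<times> nat \<Rightarrow> bool) \<Rightarrow> (nat \<times> nat \<Rightarrow> real)" where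
  "bits_coins B b = (\<lambda>q. if q \<in> B \<and> b q then 1 else 0)"

text \<open>Everything the protocol computes up to step \<open>k\<close> only looks at whether the finitely many
  coins of the first \<open>k\<close> steps show \<open>1\<close>; measurability and the independence of the next coin
  are derived from this.\<close>

definition determined_by :: "(nat \<times> nat) set \<Rightarrow> ((nat \<times> nat \<Rightarrow> real) \<Rightarrow> 'a) \<Rightarrow> bool" where
  "determined_by B f \<longleftrightarrow> (\<forall>\<omega> \<omega>'. (\<forall>q\<in>B. (\<omega> q = 1) = (\<omega>' q = 1)) \<longrightarrow> f \<omega> = f \<omega>')"

lemma determined_by_bits_coins:
  "determined_by B f \<Longrightarrow> f (bits_coins B (coin_bits B \<omega>)) = f \<omega>"
  unfolding determined_by_def
  by (erule allE[of _ "bits_coins B (coin_bits B \<omega>)"], erule allE[of _ \<omega>])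
    (auto simp: bits_coins_def coin_bits_def)

lemma sets_coins_cylinder:
  "finite B \<Longrightarrow> {\<omega> \<in> space (coins p). \<forall>q\<in>B. \<omega> q \<in> X q} \<in> sets (coins p)"
  by (intro sets.sets_Collect_finite_All sets_Collect_single) (auto simp: sets_bernoulli01)

definition bit_set :: "(nat \<times> nat \<Rightarrow> bool) \<Rightarrow> nat \<times> nat \<Rightarrow> real set" where
  "bit_set a q = (if a q then {1} else - {1})"

lemma cylinder_iff_coin_bits:
  assumes a: "a \<in> PiE B (\<lambda>_. UNIV)"
  shows "(\<forall>q\<in>B. \<omega> q \<in> bit_set a q) \<longleftrightarrow> coin_bits B \<omega> = a"
proof
  assume h: "\<forall>q\<in>B. \<omega> q \<in> bit_set a q"
  show "coin_bits B \<omega> = a"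
  proof
    fix q show "coin_bits B \<omega> q = a q"
    proof (cases "q \<in> B")
      case True then show ?thesis using h by (auto simp: coin_bits_def bit_set_def split: if_splits)
    next
      case False
      have "a \<in> extensional B" using a by (simp add: PiE_def)
      then have "a q = undefined" using False by (rule extensional_arb)
      then show ?thesis using False by (simp add: coin_bits_def)
    qed
  qed
next
  assume "coin_bits B \<omega> = a"
  then show "\<forall>q\<in>B. \<omega> q \<in> bit_set a q" by (auto simp: coin_bits_def bit_set_def restrict_def fun_eq_iff split: if_splits)
qed

lemma coin_bits_measurable:
  assumes "finite B"
  shows "coin_bits B \<in> measurable (coins p) (count_space (PiE B (\<lambda>_. UNIV)))"
proof (subst measurable_count_space_eq2)
  show "finite (PiE B (\<lambda>_. UNIV :: bool set))" using assms by (intro finite_PiE) auto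
  show "coin_bits B \<in> space (coins p) \<rightarrow> PiE B (\<lambda>_. UNIV) \<and>
    (\<forall>a\<in>PiE B (\<lambda>_. UNIV). coin_bits B -` {a} \<inter> space (coins p) \<in> sets (coins p))"
  proof (intro conjI ballI)
    show "coin_bits B \<in> space (coins p) \<rightarrow> PiE B (\<lambda>_. UNIV)" by (auto simp: coin_bits_def)
    fix a :: "nat \<times> nat \<Rightarrow> bool" assume "a \<in> PiE B (\<lambda>_. UNIV)"
    then have "coin_bits B -` {a} \<inter> space (coins p) = {\<omega> \<in> space (coins p). \<forall>q\<in>B. \<omega> q \<in> bit_set a q}"
      using cylinder_iff_coin_bits by auto
    then show "coin_bits B -` {a} \<inter> space (coins p) \<in> sets (coins p)"
      using sets_coins_cylinder[OF assms] by simp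
  qed
qed

lemma determined_by_measurable:
  assumes "finite B" "determined_by B f" "\<And>\<omega>. f \<omega> \<in> space N"
  shows "f \<in> measurable (coins p) N"
proof -
  have "(\<lambda>\<omega>. f (bits_coins B (coin_bits B \<omega>))) \<in> measurable (coins p) N"
    by (rule measurable_compose[OF coin_bits_measurable[OF assms(1)]]) (use assms(3) in simp)
  then show ?thesis using determined_by_bits_coins[OF assms(2)] by simp
qed

lemma determined_by_borel_measurable:
  "finite B \<Longrightarrow> determined_by B f \<Longrightarrow> f \<in> borel_measurable (coins p)"
  by (rule determined_by_measurable) auto

lemma determined_by_sets:
  "finite B \<Longrightarrow> determined_by B P \<Longrightarrow> {\<omega> \<in> space (coins p). P \<omega>} \<in> sets (coins p)"
  using determined_by_measurable[of B P "count_space UNIV" p] by (auto simp: pred_def)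

lemma product_prob_space_coins: "product_prob_space (\<lambda>_::nat\<times>nat. bernoulli01 p)"
  by (rule product_prob_spaceI) (rule prob_space_bernoulli01)

lemma emeasure_bernoulli01_1:
  "0 \<le> p \<Longrightarrow> p \<le> 1 \<Longrightarrow> emeasure (bernoulli01 p) {1} = ennreal p"
proof -
  assume p: "0 \<le> p" "p \<le> 1"
  have "(\<lambda>b. if b then 1 else 0 :: real) -` {1} = {True}" by (auto split: if_splits)
  then show ?thesis using p unfolding bernoulli01_def emeasure_map_pmf by (simp add: emeasure_pmf_single)
qed

lemma measure_determined_by_coin:
  assumes p: "0 \<le> p" "p \<le> 1" and B: "finite B" and q0: "q0 \<notin> B" and P: "determined_by B P"
  shows "measure (coins p) {\<omega> \<in> space (coins p). P \<omega> \<and> \<omega> q0 = 1} = p * measure (coins p) {\<omega> \<in> space (coins p). P \<omega>}"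
proof -
  interpret product_prob_space_coins: product_prob_space "\<lambda>_::nat\<times>nat. bernoulli01 p" UNIV by (rule product_prob_space_coins)
  define Sa where "Sa = {a \<in> PiE B (\<lambda>_. UNIV). P (bits_coins B a)}"
  define atom where "atom a = {\<omega> \<in> space (coins p). \<forall>q\<in>B. \<omega> q \<in> bit_set a q}" for a
  define atom' where "atom' a = {\<omega> \<in> space (coins p). \<forall>q\<in>insert q0 B. \<omega> q \<in> ((bit_set a)(q0 := {1})) q}" for a
  have finS: "finite Sa" unfolding Sa_def using B by (intro finite_subset[OF _ finite_PiE[of B "\<lambda>_. UNIV :: bool set"]]) auto
  have E1: "{\<omega> \<in> space (coins p). P \<omega>} = (\<Union>a\<in>Sa. atom a)"
  proof (intro set_eqI iffI)
    fix \<omega> assume "\<omega> \<in> {\<omega> \<in> space (coins p). P \<omega>}"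
    then have "P \<omega>" "\<omega> \<in> space (coins p)" by auto
    moreover have "coin_bits B \<omega> \<in> PiE B (\<lambda>_. UNIV)" by (auto simp: coin_bits_def)
    ultimately show "\<omega> \<in> (\<Union>a\<in>Sa. atom a)"
      using determined_by_bits_coins[OF P, of \<omega>] cylinder_iff_coin_bits[of "coin_bits B \<omega>" B \<omega>]
      by (auto simp: Sa_def atom_def intro!: bexI[of _ "coin_bits B \<omega>"])
  next
    fix \<omega> assume "\<omega> \<in> (\<Union>a\<in>Sa. atom a)"
    then obtain a where "a \<in> Sa" "\<omega> \<in> atom a" by auto
    then show "\<omega> \<in> {\<omega> \<in> space (coins p). P \<omega>}"
      using determined_by_bits_coins[OF P, of \<omega>] cylinder_iff_coin_bits[of a B \<omega>] by (auto simp: Sa_def atom_def)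
  qed
  have at': "atom' a = atom a \<inter> {\<omega>. \<omega> q0 = 1}" for a
    using q0 by (auto simp: atom'_def atom_def)
  have E2: "{\<omega> \<in> space (coins p). P \<omega> \<and> \<omega> q0 = 1} = (\<Union>a\<in>Sa. atom' a)"
    using E1 unfolding at' by auto
  have sets: "atom a \<in> sets (coins p)" "atom' a \<in> sets (coins p)" for a
  proof -
    show "atom a \<in> sets (coins p)" unfolding atom_def by (rule sets_coins_cylinder[OF B])
    show "atom' a \<in> sets (coins p)" unfolding atom'_def by (rule sets_coins_cylinder) (use B in simp)
  qed
  have disj: "disjoint_family_on atom Sa"
    unfolding disjoint_family_on_def
  proof (intro ballI impI)
    fix a b assume "a \<in> Sa" "b \<in> Sa" "a \<noteq> b"
    then show "atom a \<inter> atom b = {}" using cylinder_iff_coin_bits[of a B] cylinder_iff_coin_bits[of b B]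
      by (auto simp: atom_def Sa_def)
  qed
  have disj': "disjoint_family_on atom' Sa"
    using disj unfolding disjoint_family_on_def at' by auto
  have em: "emeasure (coins p) (atom' a) = ennreal p * emeasure (coins p) (atom a)" for a
  proof -
    have "emeasure (coins p) (atom' a) = (\<Prod>q\<in>insert q0 B. emeasure (bernoulli01 p) (((bit_set a)(q0 := {1})) q))"
      unfolding atom'_def using B by (intro product_prob_space_coins.emeasure_PiM_Collect) (auto simp: sets_bernoulli01)
    also have "\<dots> = emeasure (bernoulli01 p) {1} * (\<Prod>q\<in>B. emeasure (bernoulli01 p) (if q = q0 then {1} else bit_set a q))"
      using B q0 by (simp add: prod.insert)
    also have "(\<Prod>q\<in>B. emeasure (bernoulli01 p) (if q = q0 then {1} else bit_set a q)) = (\<Prod>q\<in>B. emeasure (bernoulli01 p) (bit_set a q))"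
      by (rule prod.cong) (use q0 in auto)
    also have "(\<Prod>q\<in>B. emeasure (bernoulli01 p) (bit_set a q)) = emeasure (coins p) (atom a)"
      unfolding atom_def using B by (intro product_prob_space_coins.emeasure_PiM_Collect[symmetric]) (auto simp: sets_bernoulli01)
    finally show ?thesis using emeasure_bernoulli01_1[OF p] by simp
  qed
  have "emeasure (coins p) {\<omega> \<in> space (coins p). P \<omega> \<and> \<omega> q0 = 1} = (\<Sum>a\<in>Sa. emeasure (coins p) (atom' a))"
    unfolding E2 using sets disj' finS by (intro sum_emeasure[symmetric]) auto
  also have "\<dots> = ennreal p * (\<Sum>a\<in>Sa. emeasure (coins p) (atom a))"
    by (simp add: em sum_distrib_left)
  also have "(\<Sum>a\<in>Sa. emeasure (coins p) (atom a)) = emeasure (coins p) {\<omega> \<in> space (coins p). P \<omega>}"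
    unfolding E1 using sets disj finS by (intro sum_emeasure) auto
  finally have "emeasure (coins p) {\<omega> \<in> space (coins p). P \<omega> \<and> \<omega> q0 = 1} = ennreal p * emeasure (coins p) {\<omega> \<in> space (coins p). P \<omega>}" .
  then show ?thesis using p by (simp add: measure_def enn2real_mult)
qed




definition first_steps :: "nat \<Rightarrow> nat \<Rightarrow> (nat \<times> nat) set" where
  "first_steps n k = {1..n} \<times> {1..k}"

lemma finite_first_steps: "finite (first_steps n k)" by (simp add: first_steps_def)

lemma determined_by_mono:
  "determined_by B f \<Longrightarrow> B \<subseteq> B' \<Longrightarrow> determined_by B' f"
  unfolding determined_by_def by blast

lemma determined_by_comp:
  "determined_by B f \<Longrightarrow> determined_by B (\<lambda>\<omega>. h (f \<omega>))"
  unfolding determined_by_def by metis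

lemma determined_by_sum:
  "(\<And>x. x \<in> S \<Longrightarrow> determined_by B (f x)) \<Longrightarrow> determined_by B (\<lambda>\<omega>. \<Sum>x\<in>S. f x \<omega> :: real)"
  unfolding determined_by_def by (metis (no_types, lifting) sum.cong)

section \<open>The expected minimal gradient\<close>

text \<open>Up to time \<open>t\<close> a fast oracle \<open>i\<close> completes at most \<open>t / \<tau>\<^sub>i\<close> jobs, so the expected
  number of fast discoveries is at most \<open>p \<Sum> t / \<tau>\<^sub>i \<le> T / 4\<close>, and by Markov's inequality
  fewer than \<open>T / 2\<close> of them happen with probability \<open>\<ge> 1/2\<close>. Slow discoveries number at
  most \<open>t / \<theta> \<le> T / 2\<close>, so on that event coordinate \<open>T - 1\<close> is never reached before \<open>t\<close>.\<close>

locale lower_bound = progress_bound n d A tau G Fs \<theta> for n d A tau G Fs \<theta> +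
  fixes p t :: real and T :: nat and gf :: "vecn \<Rightarrow> vecn" and gmin :: real
  assumes G_coin: "\<And>x xi xi'. (xi = 1 \<longleftrightarrow> xi' = 1) \<Longrightarrow> G x xi = G x xi'"
    and tau_pos: "\<And>i. i \<in> {1..n} \<Longrightarrow> tau i > 0"
    and Fs: "Fs \<subseteq> {1..n}"
    and p: "0 \<le> p" "p \<le> 1"
    and t: "t \<ge> 0" and th: "\<theta> > 0" "t / \<theta> \<le> real T / 2"
    and fast_budget: "p * (\<Sum>i\<in>Fs. t / tau i) \<le> real T / 4"
    and T: "T > 0"
    and grad_large_unreached: "\<And>x. x \<in> vecd d \<Longrightarrow> x (T - 1) = 0 \<Longrightarrow> gmin \<le> (normd d (gf x))^2"
    and gmin: "gmin \<ge> 0"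
begin

lemma delayed_oracle_coin_eq:
  "(xi = 1 \<longleftrightarrow> xi' = 1) \<Longrightarrow> delayed_oracle ta G t' x s xi = delayed_oracle ta G t' x s xi'"
  using G_coin[of xi xi'] by (cases s) (simp add: delayed_oracle_def)

lemma run_determined_by: "determined_by (first_steps n k) (\<lambda>\<omega>. run \<omega> k)"
proof (induction k)
  case 0 then show ?case by (simp add: determined_by_def)
next
  case (Suc k)
  show ?case unfolding determined_by_def
  proof (intro allI impI)
    fix \<omega> \<omega>' :: "nat \<times> nat \<Rightarrow> real" assume h: "\<forall>q\<in>first_steps n (Suc k). (\<omega> q = 1) = (\<omega>' q = 1)"
    have "\<forall>q\<in>first_steps n k. (\<omega> q = 1) = (\<omega>' q = 1)" using h by (auto simp: first_steps_def)
    then have e: "run \<omega> k = run \<omega>' k" using Suc unfolding determined_by_def by blast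
    obtain t' i0 x where Ax: "A (hist \<omega> k) = (t', i0, x)" by (cases "A (hist \<omega> k)") auto
    have gsv: "set (hist \<omega> k) \<subseteq> vecd d" using run_in_vecd by blast
    have i0: "i0 \<in> {1..n}" using algo_output[OF gsv] Ax by simp
    then have "(\<omega> (i0, Suc k) = 1) = (\<omega>' (i0, Suc k) = 1)" using h by (auto simp: first_steps_def)
    then have "delayed_oracle (tau i0) G t' x (states \<omega> k i0) (\<omega> (i0, Suc k)) = delayed_oracle (tau i0) G t' x (states \<omega> k i0) (\<omega>' (i0, Suc k))"
      by (rule delayed_oracle_coin_eq)
    then show "run \<omega> (Suc k) = run \<omega>' (Suc k)" using e Ax by (simp add: case_prod_beta)
  qed
qed

lemma proto_time_determined_by:
  "determined_by (first_steps n k) (\<lambda>\<omega>. proto_time A tau G \<omega> k)"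
proof (cases k)
  case 0 then show ?thesis by (simp add: determined_by_def proto_time_def)
next
  case (Suc m)
  have "determined_by (first_steps n m) (\<lambda>\<omega>. fst (A (hist \<omega> m)))" by (rule determined_by_comp[OF run_determined_by])
  then have "determined_by (first_steps n k) (\<lambda>\<omega>. fst (A (hist \<omega> m)))" by (rule determined_by_mono) (auto simp: first_steps_def Suc)
  then show ?thesis using Suc by (simp add: proto_time_def grads_def)
qed

lemma proto_point_determined_by:
  "determined_by (first_steps n k) (\<lambda>\<omega>. proto_point A tau G \<omega> k)"
  unfolding proto_point_def grads_def by (rule determined_by_comp[OF run_determined_by])

lemma completes_determined_by:
  "determined_by (first_steps n k) (\<lambda>\<omega>. completes \<omega> i (Suc k) \<and> proto_time A tau G \<omega> (Suc k) \<le> t)"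
proof -
  have "determined_by (first_steps n k) (\<lambda>\<omega>. (\<lambda>r. fst (snd (A (fst r))) = i \<and> snd (snd (snd r i)) \<and> \<not> fst (A (fst r)) < fst (snd r i) + tau i
       \<and> fst (A (fst r)) \<le> t) (run \<omega> k))"
    by (rule determined_by_comp[OF run_determined_by])
  then show ?thesis by (simp add: completes_def proto_time_Suc)
qed

lemma event_integral:
  assumes "finite B" "determined_by B P"
  shows "integrable (coins p) (\<lambda>\<omega>. if P \<omega> then 1 else 0 :: real)"
    "integral\<^sup>L (coins p) (\<lambda>\<omega>. if P \<omega> then 1 else 0 :: real) = measure (coins p) {\<omega> \<in> space (coins p). P \<omega>}"
proof -
  interpret S: prob_space "coins p" by (rule prob_space_coins)
  have st: "{\<omega> \<in> space (coins p). P \<omega>} \<in> sets (coins p)" by (rule determined_by_sets[OF assms])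
  have e: "(\<lambda>\<omega>. if P \<omega> then 1 else 0 :: real) = indicator {\<omega> \<in> space (coins p). P \<omega>}"
    by (auto simp: indicator_def space_coins)
  show "integrable (coins p) (\<lambda>\<omega>. if P \<omega> then 1 else 0 :: real)" unfolding e using st by (intro integrable_real_indicator) (auto simp: S.emeasure_eq_measure)
  show "integral\<^sup>L (coins p) (\<lambda>\<omega>. if P \<omega> then 1 else 0 :: real) = measure (coins p) {\<omega> \<in> space (coins p). P \<omega>}"
    unfolding e using st by simp
qed

definition counted_completion :: "(nat \<times> nat \<Rightarrow> real) \<Rightarrow> nat \<Rightarrow> nat \<Rightarrow> bool" where
  "counted_completion \<omega> i k = (completes \<omega> i (Suc k) \<and> proto_time A tau G \<omega> (Suc k) \<le> t)"

abbreviation "counted_hit \<omega> i k \<equiv> counted_completion \<omega> i k \<and> \<omega> (i, Suc k) = 1"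

definition fast_hits :: "(nat \<times> nat \<Rightarrow> real) \<Rightarrow> nat \<Rightarrow> real" where
  "fast_hits \<omega> K = (\<Sum>k<K. \<Sum>i\<in>Fs. if counted_hit \<omega> i k then 1 else 0)"

definition counted_completions :: "(nat \<times> nat \<Rightarrow> real) \<Rightarrow> nat \<Rightarrow> nat \<Rightarrow> real" where
  "counted_completions \<omega> i K = (\<Sum>k<K. if counted_completion \<omega> i k then 1 else 0)"

lemma finite_Fs: "finite Fs" using Fs finite_subset by blast

lemma counted_completion_determined_by:
  "determined_by (first_steps n k) (\<lambda>\<omega>. counted_completion \<omega> i k)"
  unfolding counted_completion_def by (rule completes_determined_by)

lemma counted_hit_determined_by:
  "determined_by (first_steps n (Suc k)) (\<lambda>\<omega>. counted_hit \<omega> i k)"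
proof -
  have a: "determined_by (first_steps n (Suc k)) (\<lambda>\<omega>. counted_completion \<omega> i k)" by (rule determined_by_mono[OF counted_completion_determined_by]) (auto simp: first_steps_def)
  show ?thesis
  proof (cases "i \<in> {1..n}")
    case True
    then have "(i, Suc k) \<in> first_steps n (Suc k)" by (simp add: first_steps_def)
    then show ?thesis using a unfolding determined_by_def by metis
  next
    case False
    have "\<not> counted_completion \<omega> i k" for \<omega>
    proof
      assume "counted_completion \<omega> i k"
      then have "fst (snd (A (hist \<omega> k))) = i" by (simp add: counted_completion_def completes_def)
      moreover have "set (hist \<omega> k) \<subseteq> vecd d" using run_in_vecd by blast
      ultimately show False using algo_output False by fastforce
    qed
    then show ?thesis by (simp add: determined_by_def)
  qed
qed

text \<open>The coin \<open>(i, k + 1)\<close> is independent of the first \<open>k\<close> steps.\<close>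

lemma integral_counted_hit:
  "i \<in> Fs \<Longrightarrow> integral\<^sup>L (coins p) (\<lambda>\<omega>. if counted_hit \<omega> i k then 1 else 0 :: real)
   = p * integral\<^sup>L (coins p) (\<lambda>\<omega>. if counted_completion \<omega> i k then 1 else 0 :: real)"
proof -
  have "(i, Suc k) \<notin> first_steps n k" by (simp add: first_steps_def)
  then show ?thesis
    using event_integral(2)[OF finite_first_steps counted_hit_determined_by] event_integral(2)[OF finite_first_steps counted_completion_determined_by]
      measure_determined_by_coin[OF p finite_first_steps _ counted_completion_determined_by, of "(i, Suc k)"] by simp
qed

lemma completions_eq_sum:
  "real (completions \<omega> i K) = (\<Sum>k<K. if completes \<omega> i (Suc k) then 1 else 0)"
  by (induction K) (simp_all add: completions_def completions_Suc)

lemma counted_completions_eq: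
  "proto_time A tau G \<omega> K \<le> t \<Longrightarrow> counted_completions \<omega> i K = real (completions \<omega> i K)"
  unfolding counted_completions_def completions_eq_sum counted_completion_def
proof (intro sum.cong refl)
  fix k assume "proto_time A tau G \<omega> K \<le> t" "k \<in> {..<K}"
  then have "proto_time A tau G \<omega> (Suc k) \<le> t" using proto_time_mono[of "Suc k" K \<omega>] by auto
  then show "(if completes \<omega> i (Suc k) \<and> proto_time A tau G \<omega> (Suc k) \<le> t then 1 else 0) = (if completes \<omega> i (Suc k) then 1 else (0::real))"
    by simp
qed

lemma counted_completions_time:
  "i \<in> {1..n} \<Longrightarrow> counted_completions \<omega> i K * tau i \<le> t"
proof (induction K)
  case 0 then show ?case using t by (simp add: counted_completions_def)
next
  case (Suc K)
  show ?case
  proof (cases "proto_time A tau G \<omega> (Suc K) \<le> t")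
    case True
    then show ?thesis using counted_completions_eq[OF True] completions_time[of \<omega> i "Suc K"] by simp
  next
    case False
    then have "counted_completions \<omega> i (Suc K) = counted_completions \<omega> i K" by (simp add: counted_completions_def counted_completion_def)
    then show ?thesis using Suc by simp
  qed
qed

lemma integrable_fast_hits: "integrable (coins p) (\<lambda>\<omega>. fast_hits \<omega> K)"
  unfolding fast_hits_def using event_integral(1)[OF finite_first_steps counted_hit_determined_by]
  by (intro Bochner_Integration.integrable_sum) auto

lemma integral_fast_hits_le:
  "integral\<^sup>L (coins p) (\<lambda>\<omega>. fast_hits \<omega> K) \<le> real T / 4"
proof -
  interpret S: prob_space "coins p" by (rule prob_space_coins)
  have ii: "integrable (coins p) (\<lambda>\<omega>. if counted_completion \<omega> i k then 1 else 0 :: real)" for i k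
    by (rule event_integral(1)[OF finite_first_steps counted_completion_determined_by])
  have "integral\<^sup>L (coins p) (\<lambda>\<omega>. fast_hits \<omega> K) = (\<Sum>k<K. \<Sum>i\<in>Fs. integral\<^sup>L (coins p) (\<lambda>\<omega>. if counted_hit \<omega> i k then 1 else 0 :: real))"
    unfolding fast_hits_def using event_integral(1)[OF finite_first_steps counted_hit_determined_by]
    by (simp add: Bochner_Integration.integral_sum Bochner_Integration.integrable_sum)
  also have "\<dots> = p * (\<Sum>k<K. \<Sum>i\<in>Fs. integral\<^sup>L (coins p) (\<lambda>\<omega>. if counted_completion \<omega> i k then 1 else 0 :: real))"
    by (simp add: integral_counted_hit sum_distrib_left)
  also have "(\<Sum>k<K. \<Sum>i\<in>Fs. integral\<^sup>L (coins p) (\<lambda>\<omega>. if counted_completion \<omega> i k then 1 else 0 :: real)) = integral\<^sup>L (coins p) (\<lambda>\<omega>. \<Sum>i\<in>Fs. counted_completions \<omega> i K)"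
    unfolding counted_completions_def using ii
    by (simp add: Bochner_Integration.integral_sum Bochner_Integration.integrable_sum sum.swap[of _ "{..<K}" Fs])
  also have "\<dots> \<le> integral\<^sup>L (coins p) (\<lambda>\<omega>. \<Sum>i\<in>Fs. t / tau i)"
  proof (rule integral_mono)
    show "integrable (coins p) (\<lambda>\<omega>. \<Sum>i\<in>Fs. counted_completions \<omega> i K)" unfolding counted_completions_def using ii
      by (intro Bochner_Integration.integrable_sum) auto
    show "integrable (coins p) (\<lambda>\<omega>. \<Sum>i\<in>Fs. t / tau i)" by simp
    fix \<omega> show "(\<Sum>i\<in>Fs. counted_completions \<omega> i K) \<le> (\<Sum>i\<in>Fs. t / tau i)"
    proof (rule sum_mono)
      fix i assume "i \<in> Fs"
      then have i: "i \<in> {1..n}" using Fs by auto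
      then show "counted_completions \<omega> i K \<le> t / tau i" using counted_completions_time[OF i, of \<omega> K] tau_pos[OF i] by (simp add: field_simps)
    qed
  qed
  also have "\<dots> = (\<Sum>i\<in>Fs. t / tau i)" using S.prob_space by simp
  finally show ?thesis using fast_budget p by (smt (verit) mult_left_mono)
qed

definition many_hits :: "nat \<Rightarrow> (nat \<times> nat \<Rightarrow> real) set" where
  "many_hits K = {\<omega> \<in> space (coins p). fast_hits \<omega> K \<ge> real T / 2}"

lemma fast_hits_determined_by:
  "determined_by (first_steps n K) (\<lambda>\<omega>. fast_hits \<omega> K)"
  unfolding fast_hits_def
proof (intro determined_by_sum)
  fix k i assume "k \<in> {..<K}"
  then have "determined_by (first_steps n K) (\<lambda>\<omega>. counted_hit \<omega> i k)"
    by (intro determined_by_mono[OF counted_hit_determined_by]) (auto simp: first_steps_def)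
  then show "determined_by (first_steps n K) (\<lambda>\<omega>. if counted_hit \<omega> i k then 1 else 0)"
    by (rule determined_by_comp)
qed

lemma many_hits_sets: "many_hits K \<in> sets (coins p)"
  unfolding many_hits_def by (rule determined_by_sets[OF finite_first_steps]) (rule determined_by_comp[OF fast_hits_determined_by])

lemma fast_hits_nonneg: "fast_hits \<omega> K \<ge> 0" by (simp add: fast_hits_def sum_nonneg)

lemma fast_hits_mono: "K \<le> K' \<Longrightarrow> fast_hits \<omega> K \<le> fast_hits \<omega> K'"
  unfolding fast_hits_def by (rule sum_mono2) (auto intro: sum_nonneg)

lemma measure_many_hits: "measure (coins p) (many_hits K) \<le> 1 / 2"
proof -
  interpret S: prob_space "coins p" by (rule prob_space_coins)
  have "measure (coins p) {\<omega> \<in> space (coins p). fast_hits \<omega> K \<ge> real T / 2} \<le> integral\<^sup>L (coins p) (\<lambda>\<omega>. fast_hits \<omega> K) / (real T / 2)"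
    by (rule integral_Markov_inequality_measure[OF integrable_fast_hits, where A="space (coins p)"]) (use T fast_hits_nonneg in auto)
  also have "\<dots> \<le> (real T / 4) / (real T / 2)" using integral_fast_hits_le T by (intro divide_right_mono) auto
  also have "\<dots> = 1 / 2" using T by simp
  finally show ?thesis by (simp add: many_hits_def)
qed

lemma measure_Union_many_hits: "measure (coins p) (\<Union>K. many_hits K) \<le> 1 / 2"
proof -
  interpret S: prob_space "coins p" by (rule prob_space_coins)
  have inc: "incseq many_hits"
    unfolding incseq_def many_hits_def using fast_hits_mono by (auto intro: order.trans)
  have "(\<lambda>K. measure (coins p) (many_hits K)) \<longlonglongrightarrow> measure (coins p) (\<Union>K. many_hits K)"
    by (rule S.finite_Lim_measure_incseq) (use many_hits_sets inc in auto)
  then show ?thesis by (rule LIMSEQ_le_const2) (use measure_many_hits in auto)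
qed

definition grad_sq :: "(nat \<times> nat \<Rightarrow> real) \<Rightarrow> nat \<Rightarrow> real" where
  "grad_sq \<omega> k = (normd d (gf (proto_point A tau G \<omega> k)))^2"

lemma fast_successes_eq_sum:
  "real (fast_successes \<omega> K) = (\<Sum>k<K. if fast_success \<omega> (Suc k) then 1 else 0)"
  by (induction K) (simp_all add: fast_successes_def fast_successes_Suc)

lemma grad_sq_lower:
  assumes good: "\<omega> \<notin> (\<Union>K. many_hits K)" and k: "proto_time A tau G \<omega> k \<le> t"
  shows "gmin \<le> grad_sq \<omega> k"
proof -
  obtain M R sc where I: "progress_inv \<omega> k M R sc" using progress_inv_exists by blast
  have "\<not> (real T / 2 \<le> fast_hits \<omega> k)" using good by (auto simp: many_hits_def space_coins)
  then have EKk: "fast_hits \<omega> k < real T / 2" by linarith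
  have fsle: "real (fast_successes \<omega> k) \<le> fast_hits \<omega> k"
    unfolding fast_successes_eq_sum fast_hits_def
  proof (rule sum_mono)
    fix j assume j: "j \<in> {..<k}"
    show "(if fast_success \<omega> (Suc j) then 1 else 0) \<le> (\<Sum>i\<in>Fs. if counted_hit \<omega> i j then 1 else (0::real))"
    proof (cases "fast_success \<omega> (Suc j)")
      case True
      then obtain i where i: "i \<in> Fs" "completes \<omega> i (Suc j)" "\<omega> (i, Suc j) = 1" by (auto simp: fast_success_def)
      have "proto_time A tau G \<omega> (Suc j) \<le> t" using proto_time_mono[of "Suc j" k \<omega>] j k by auto
      then have "counted_completion \<omega> i j" using i by (simp add: counted_completion_def)
      then have "(if counted_hit \<omega> i j then 1 else 0) \<le> (\<Sum>i\<in>Fs. if counted_hit \<omega> i j then 1 else (0::real))"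
        using i finite_Fs by (intro member_le_sum) auto
      then show ?thesis using True i \<open>counted_completion \<omega> i j\<close> by simp
    qed (auto intro: sum_nonneg)
  qed
  have Iu: "\<forall>g\<in>set (hist \<omega> k). supported_below g M" "M \<le> fast_successes \<omega> k + sc" "real sc * \<theta> \<le> R" "R \<le> proto_time A tau G \<omega> k"
    using I unfolding progress_inv_def by blast+
  have "real sc * \<theta> \<le> t" using Iu k by linarith
  then have "real sc \<le> t / \<theta>" using th by (simp add: field_simps)
  then have scT: "real sc \<le> real T / 2" using th by linarith
  have "real M \<le> real (fast_successes \<omega> k) + real sc" using Iu(2) by linarith
  then have MT: "M < T" using fsle EKk scT by linarith
  have gsv: "set (hist \<omega> k) \<subseteq> vecd d" using run_in_vecd by blast
  have xs: "supported_below (proto_point A tau G \<omega> k) M"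
    unfolding proto_point_def grads_def by (rule algo_point_supported_below[OF gsv Iu(1)])
  have xv: "proto_point A tau G \<omega> k \<in> vecd d"
    unfolding proto_point_def grads_def using algo_output[OF gsv] by simp
  have "proto_point A tau G \<omega> k (T - 1) = 0" using xs MT by (auto simp: supported_below_def)
  then show ?thesis unfolding grad_sq_def by (rule grad_large_unreached[OF xv])
qed

definition min_grad_sq :: "(nat \<times> nat \<Rightarrow> real) \<Rightarrow> real" where
  "min_grad_sq \<omega> = (INF k\<in>S_set A tau G \<omega> t. grad_sq \<omega> k)"

lemma grad_sq_determined_by: "determined_by (first_steps n k) (\<lambda>\<omega>. grad_sq \<omega> k)"
  unfolding grad_sq_def by (rule determined_by_comp[OF proto_point_determined_by])

lemma grad_sq_0: "grad_sq \<omega> 0 = grad_sq \<omega>' 0"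
  using grad_sq_determined_by[of 0] by (simp add: determined_by_def first_steps_def)

lemma zero_in_S_set: "0 \<in> S_set A tau G \<omega> t"
  using t by (simp add: S_set_def proto_time_def)

lemma grad_sq_nonneg: "grad_sq \<omega> k \<ge> 0" by (simp add: grad_sq_def)

lemma min_grad_sq_eq_INF:
  "min_grad_sq \<omega> = (INF k. (if proto_time A tau G \<omega> k \<le> t then grad_sq \<omega> k else grad_sq \<omega> 0))"
proof -
  have "(\<lambda>k. (if proto_time A tau G \<omega> k \<le> t then grad_sq \<omega> k else grad_sq \<omega> 0)) ` UNIV = (\<lambda>k. grad_sq \<omega> k) ` S_set A tau G \<omega> t"
    using zero_in_S_set[of \<omega>] by (auto simp: S_set_def image_iff)
  then show ?thesis unfolding min_grad_sq_def by simp
qed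

lemma min_grad_sq_measurable: "min_grad_sq \<in> borel_measurable (coins p)"
proof -
  have "(\<lambda>\<omega>. INF k. (if proto_time A tau G \<omega> k \<le> t then grad_sq \<omega> k else grad_sq \<omega> 0)) \<in> borel_measurable (coins p)"
  proof (rule borel_measurable_cINF_real)
    fix k :: nat
    have a: "determined_by (first_steps n k) (\<lambda>\<omega>. grad_sq \<omega> 0)" by (rule determined_by_mono[OF grad_sq_determined_by]) (auto simp: first_steps_def)
    have "determined_by (first_steps n k) (\<lambda>\<omega>. (if proto_time A tau G \<omega> k \<le> t then grad_sq \<omega> k else grad_sq \<omega> 0))"
      unfolding determined_by_def
    proof (intro allI impI)
      fix \<omega> \<omega>' :: "nat \<times> nat \<Rightarrow> real" assume e: "\<forall>q\<in>first_steps n k. (\<omega> q = 1) = (\<omega>' q = 1)"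
      have "proto_time A tau G \<omega> k = proto_time A tau G \<omega>' k" "grad_sq \<omega> k = grad_sq \<omega>' k" "grad_sq \<omega> 0 = grad_sq \<omega>' 0"
        using proto_time_determined_by[of k] grad_sq_determined_by[of k] a e unfolding determined_by_def by blast+
      then show "(if proto_time A tau G \<omega> k \<le> t then grad_sq \<omega> k else grad_sq \<omega> 0) = (if proto_time A tau G \<omega>' k \<le> t then grad_sq \<omega>' k else grad_sq \<omega>' 0)"
        by simp
    qed
    then show "(\<lambda>\<omega>. (if proto_time A tau G \<omega> k \<le> t then grad_sq \<omega> k else grad_sq \<omega> 0)) \<in> borel_measurable (coins p)"
      by (rule determined_by_borel_measurable[OF finite_first_steps])
  qed simp
  then show ?thesis using min_grad_sq_eq_INF by presburger
qed

lemma min_grad_sq_bounds: "0 \<le> min_grad_sq \<omega>" "min_grad_sq \<omega> \<le> grad_sq \<omega> 0"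
proof -
  show "0 \<le> min_grad_sq \<omega>" unfolding min_grad_sq_def using zero_in_S_set[of \<omega>] grad_sq_nonneg by (intro cINF_greatest) auto
  show "min_grad_sq \<omega> \<le> grad_sq \<omega> 0" unfolding min_grad_sq_def using zero_in_S_set[of \<omega>] grad_sq_nonneg
    by (intro cINF_lower) (auto intro!: bdd_belowI[of _ 0])
qed

lemma integral_min_grad_sq_ge: "integral\<^sup>L (coins p) min_grad_sq \<ge> gmin / 2"
proof -
  interpret S: prob_space "coins p" by (rule prob_space_coins)
  let ?U = "\<Union>K. many_hits K"
  have Us: "?U \<in> sets (coins p)" using many_hits_sets by auto
  have intH: "integrable (coins p) min_grad_sq"
  proof (rule S.integrable_const_bound[where B="grad_sq (\<lambda>_. 0) 0"])
    show "AE x in coins p. norm (min_grad_sq x) \<le> grad_sq (\<lambda>_. 0) 0"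
    proof (rule AE_I2)
      fix x
      have "min_grad_sq x \<le> grad_sq (\<lambda>_. 0) 0" using min_grad_sq_bounds(2)[of x] grad_sq_0[of x "\<lambda>_. 0"] by simp
      then show "norm (min_grad_sq x) \<le> grad_sq (\<lambda>_. 0) 0" using min_grad_sq_bounds(1)[of x] by simp
    qed
  qed (rule min_grad_sq_measurable)
  have intL: "integrable (coins p) (\<lambda>\<omega>. gmin * indicator (space (coins p) - ?U) \<omega>)"
    using Us by (intro integrable_mult_right integrable_real_indicator) (auto simp: S.emeasure_eq_measure)
  have m1: "integral\<^sup>L (coins p) (\<lambda>\<omega>. gmin * indicator (space (coins p) - ?U) \<omega>) \<le> integral\<^sup>L (coins p) min_grad_sq"
  proof (rule integral_mono[OF intL intH])
    fix \<omega> assume "\<omega> \<in> space (coins p)"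
    show "gmin * indicator (space (coins p) - ?U) \<omega> \<le> min_grad_sq \<omega>"
    proof (cases "\<omega> \<in> ?U")
      case True then show ?thesis using min_grad_sq_bounds[of \<omega>] by simp
    next
      case False
      have "gmin \<le> min_grad_sq \<omega>" unfolding min_grad_sq_def using zero_in_S_set[of \<omega>] grad_sq_lower[OF False]
        by (intro cINF_greatest) (auto simp: S_set_def)
      then show ?thesis using False \<open>\<omega> \<in> space (coins p)\<close> by simp
    qed
  qed
  have m2: "integral\<^sup>L (coins p) (\<lambda>\<omega>. gmin * indicator (space (coins p) - ?U) \<omega>) = gmin * measure (coins p) (space (coins p) - ?U)"
  proof -
    have "(space (coins p) - ?U) \<inter> space (coins p) = space (coins p) - ?U" by blast
    then show ?thesis using Us by simp
  qed
  have m3: "measure (coins p) (space (coins p) - ?U) \<ge> 1 / 2"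
    using S.prob_compl[OF Us] measure_Union_many_hits by simp
  have m4: "gmin * (1/2) \<le> gmin * measure (coins p) (space (coins p) - ?U)"
    using gmin m3 by (intro mult_left_mono) auto
  from m1 m2 m4 show ?thesis by linarith
qed

end

section \<open>The stochastic oracle\<close>

definition progress_coord :: "vecn \<Rightarrow> nat" where
  "progress_coord x = (LEAST P. supported_below x P)"

text \<open>Unbiased, with variance \<open>g\<^sub>0\<^sup>2 (1 - p) / p\<close> at the single coordinate \<open>g\<^sub>0\<close> that can extend
  the support of the query point; that coordinate is revealed only when the coin shows \<open>1\<close>.\<close>

definition sparse_oracle :: "nat \<Rightarrow> real \<Rightarrow> real \<Rightarrow> real \<Rightarrow> vecn \<Rightarrow> real \<Rightarrow> vecn" where
  "sparse_oracle T L g p x xi j =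
     (if j = progress_coord x then (if xi = 1 then hard_grad T L g x j / p else 0)
      else hard_grad T L g x j)"

lemma progress_coord: "x \<in> vecd T \<Longrightarrow> supported_below x (progress_coord x)"
  unfolding progress_coord_def by (rule LeastI[of "supported_below x" T]) (simp add: vecd_def supported_below_def)

lemma progress_coord_le: "supported_below x P \<Longrightarrow> progress_coord x \<le> P"
  unfolding progress_coord_def by (rule Least_le)

lemma bernoulli_variance_bound:
  fixes g0 p K s :: real
  assumes p: "0 < p" "p \<le> 1" and g: "g0^2 \<le> K" and ps: "p = 1 \<or> p = K / s" and s: "s > 0"
  shows "(g0 / p - g0)^2 * p + g0^2 * (1 - p) \<le> s"
proof -
  have eq: "(g0 / p - g0)^2 * p + g0^2 * (1 - p) = g0^2 * (1 - p) / p"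
    using p by (simp add: field_simps power2_eq_square)
  show ?thesis
  proof (cases "p = 1")
    case True then show ?thesis using eq s by simp
  next
    case False
    then have pK: "p = K / s" using ps by simp
    have "g0^2 * (1 - p) / p \<le> g0^2 / p" using p by (intro divide_right_mono) (auto simp: mult_left_le)
    also have "\<dots> \<le> K / p" using g p by (intro divide_right_mono) auto
    also have "\<dots> = s" using pK p s by (auto simp: field_simps)
    finally show ?thesis using eq by simp
  qed
qed

context hard_instance
begin

lemma sparse_oracle_in_vecd: "x \<in> vecd T \<Longrightarrow> sparse_oracle T L g p x xi \<in> vecd T"
  using hard_grad_in_vecd[of x] by (auto simp: sparse_oracle_def vecd_def)

lemma sparse_oracle_unbiased:
  "0 < p \<Longrightarrow> p \<le> 1 \<Longrightarrow> integral\<^sup>L (bernoulli01 p) (\<lambda>xi. sparse_oracle T L g p x xi j) = hard_grad T L g x j"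
  by (simp add: integral_bernoulli01 sparse_oracle_def field_simps)

lemma sparse_oracle_variance:
  assumes p: "0 < p" "p \<le> 1" and s: "s > 0" and ps: "p = 1 \<or> p = 25 * g^2 / s"
  shows "integral\<^sup>L (bernoulli01 p) (\<lambda>xi. (normd T (\<lambda>j. sparse_oracle T L g p x xi j - hard_grad T L g x j))^2) \<le> s"
proof -
  let ?j = "progress_coord x"
  let ?g0 = "hard_grad T L g x ?j"
  have "(\<Sum>j<T. (sparse_oracle T L g p x xi j - hard_grad T L g x j)^2)
      = (\<Sum>j<T. if j = ?j then (sparse_oracle T L g p x xi ?j - ?g0)^2 else 0)" for xi
    by (rule sum.cong) (auto simp: sparse_oracle_def)
  then have "integral\<^sup>L (bernoulli01 p) (\<lambda>xi. (normd T (\<lambda>j. sparse_oracle T L g p x xi j - hard_grad T L g x j))^2)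
      = (if ?j < T then (?g0 / p - ?g0)^2 * p + ?g0^2 * (1 - p) else 0)"
    using p by (simp add: normd_squared integral_bernoulli01 sparse_oracle_def)
  also have "\<dots> \<le> s"
  proof -
    have "\<bar>?g0\<bar>^2 \<le> (5 * g)^2" using hard_grad_bounded[of x ?j] by (intro power_mono) auto
    then have "?g0^2 \<le> 25 * g^2" by (simp add: power_mult_distrib)
    then show ?thesis using bernoulli_variance_bound[OF p _ ps s] s by auto
  qed
  finally show ?thesis .
qed

lemma sparse_oracle_supported_Suc:
  assumes "supported_below x P"
  shows "supported_below (sparse_oracle T L g p x xi) (Suc P)"
  unfolding supported_below_def
proof (intro allI impI)
  fix j assume j: "Suc P \<le> j"
  then have "j \<noteq> progress_coord x" using progress_coord_le[OF assms] by auto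
  moreover have "hard_grad T L g x j = 0"
    using j assms by (intro hard_grad_zero_beyond[of P]) (auto simp: supported_below_def)
  ultimately show "sparse_oracle T L g p x xi j = 0" by (simp add: sparse_oracle_def)
qed

lemma sparse_oracle_supported:
  assumes x: "x \<in> vecd T" and P: "supported_below x P" and coin: "xi \<noteq> 1"
  shows "supported_below (sparse_oracle T L g p x xi) P"
  unfolding supported_below_def
proof (intro allI impI)
  fix j assume j: "P \<le> j"
  show "sparse_oracle T L g p x xi j = 0"
  proof (cases "j = progress_coord x")
    case True then show ?thesis using coin by (simp add: sparse_oracle_def)
  next
    case False
    then have "j \<ge> Suc (progress_coord x)" using j progress_coord_le[OF P] by auto
    then have "hard_grad T L g x j = 0"
      using progress_coord[OF x] by (intro hard_grad_zero_beyond) (auto simp: supported_below_def)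
    then show ?thesis using False by (simp add: sparse_oracle_def)
  qed
qed

end

section \<open>The time horizon\<close>

lemma down_closed_eq_atLeastAtMost:
  assumes "finite F" "\<And>i j. i \<in> F \<Longrightarrow> 1 \<le> j \<Longrightarrow> j \<le> i \<Longrightarrow> j \<in> F" "\<And>i. i \<in> F \<Longrightarrow> 1 \<le> i"
  shows "F = {1..card F}"
proof (cases "F = {}")
  case True then show ?thesis by simp
next
  case False
  define m where "m = Max F"
  have "F = {1..m}"
  proof
    show "F \<subseteq> {1..m}" using assms(1,3) by (auto simp: m_def)
    show "{1..m} \<subseteq> F" using assms(2)[of m] Max_in[OF assms(1) False] by (auto simp: m_def)
  qed
  then show ?thesis by simp
qed

text \<open>Here \<open>H = \<Sum>\<^sub>i\<^sub>\<le>\<^sub>m\<^sub>0 1/\<tau>\<^sub>i\<close> over the \<open>m\<^sub>0\<close> fast oracles: each of them has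
  \<open>t / \<tau>\<^sub>i \<ge> T / 2\<close>, while the choice of \<open>t\<close> bounds \<open>t H\<close> from above. Comparing the two
  forces \<open>m\<^sub>0 \<le> s / (3200 e)\<close>, whence \<open>p m\<^sub>0 \<le> 1/2\<close>.\<close>

lemma horizon_budget_arith:
  fixes m0 Q T H t c p s e :: real
  assumes Q: "Q > 0" and e: "e > 0" and s: "s > 0" and c: "c = 1 / (12800 * 21504)"
    and T: "T \<ge> Q / 21504" and m0: "m0 \<ge> 0"
    and up: "t * H \<le> c * (m0 * Q + s * Q / e)" and low: "m0 * T / 2 \<le> t * H"
    and p0: "p \<ge> 0" and p1: "p \<le> 1600 * e / s"
  shows "p * (t * H) \<le> T / 4"
proof -
  define a :: real where "a = 21504"
  have a: "a > 0" "c = 1 / (12800 * a)" using c by (simp_all add: a_def)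
  have "m0 * (Q / a) / 2 \<le> m0 * T / 2"
    using T m0 unfolding a_def by (intro divide_right_mono mult_left_mono) auto
  then have "Q * (m0 / (2 * a)) \<le> Q * (c * m0 + c * s / e)"
    using low up by (simp add: field_simps)
  then have h1: "m0 / (2 * a) \<le> c * m0 + c * s / e" using Q by (rule mult_left_le_imp_le)
  have "c * m0 \<le> m0 / (4 * a)" using a m0 by (simp add: divide_left_mono)
  then have h2: "m0 / (4 * a) \<le> c * s / e" using h1 by (simp add: field_simps)
  have m0b: "m0 \<le> s / (3200 * e)"
    using mult_left_mono[OF h2, of "4 * a"] a e by (simp add: field_simps)
  have pm: "p * m0 \<le> 1 / 2"
  proof -
    have "p * m0 \<le> (1600 * e / s) * (s / (3200 * e))" using p0 p1 m0 m0b by (intro mult_mono) auto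
    also have "\<dots> = 1 / 2" using e s by (simp add: field_simps)
    finally show ?thesis .
  qed
  have ps: "p * (s / e) \<le> 1600"
    using mult_right_mono[OF p1, of "s / e"] s e by (simp add: field_simps)
  have "p * (t * H) \<le> p * (c * (m0 * Q + s * Q / e))" using up p0 by (rule mult_left_mono)
  also have "\<dots> = c * Q * (p * m0 + p * (s / e))" by (simp add: algebra_simps)
  also have "\<dots> \<le> c * Q * (1/2 + 1600)"
  proof (rule mult_left_mono)
    show "p * m0 + p * (s / e) \<le> 1/2 + 1600" using pm ps by linarith
  qed (use a Q in simp)
  also have "\<dots> \<le> (Q / a) / 4" using a Q by (simp add: field_simps)
  also have "\<dots> \<le> T / 4" using T unfolding a_def by simp
  finally show ?thesis .
qed

locale hard_problem =
  fixes n :: nat and sigma2 :: real and tau :: "nat \<Rightarrow> real" and L Delta eps :: real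
    and A :: "nat \<Rightarrow> algo"
  assumes n: "n \<ge> 1" and sigma2: "sigma2 > 0" and tau1: "0 < tau 1"
    and tau_sorted: "\<forall>i j. 1 \<le> i \<longrightarrow> i \<le> j \<longrightarrow> j \<le> n \<longrightarrow> tau i \<le> tau j"
    and L: "L > 0" and Delta: "Delta > 0" and eps: "0 < eps" and eps_small: "eps \<le> 1 / 10752 * L * Delta"
    and algos: "\<forall>d. is_algorithm n d (A d) \<and> zero_respecting d (A d)"
begin

definition "Q = L * Delta / eps"
definition "T = nat \<lfloor>Q / 10752\<rfloor>"
definition "g = 8 * sqrt eps"
definition "p = min 1 (1600 * eps / sigma2)"
definition "rate m = (real m / (\<Sum>i=1..m. 1 / tau i)) *
                      (L * Delta / eps + sigma2 * L * Delta / (real m * eps^2))"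
definition "horizon = 1 / (12800 * 21504) * Min (rate ` {1..n})"
definition "Fs = {i \<in> {1..n}. tau i < 2 * horizon / real T}"
definition "\<theta> = max (2 * horizon / real T) (tau 1)"
definition "G = sparse_oracle T L g p"

lemma tau_pos: "i \<in> {1..n} \<Longrightarrow> tau i > 0"
  using tau_sorted tau1 by (metis atLeastAtMost_iff le_refl less_le_trans)

lemma Q_ge: "Q \<ge> 10752"
  using eps_small eps L Delta unfolding Q_def by (simp add: field_simps)

lemma T_bounds: "T \<ge> 1" "real T \<le> Q / 10752" "real T \<ge> Q / 21504"
proof -
  have fl: "\<lfloor>Q / 10752\<rfloor> \<ge> 1" using Q_ge by simp
  then have Treal: "real T = of_int \<lfloor>Q / 10752\<rfloor>" unfolding T_def by simp
  show "T \<ge> 1" using fl unfolding T_def by linarith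
  show "real T \<le> Q / 10752" using Treal by linarith
  have "of_int \<lfloor>Q / 10752\<rfloor> > Q / 10752 - 1" "of_int \<lfloor>Q / 10752\<rfloor> \<ge> (1::real)"
    using fl by linarith+
  then show "real T \<ge> Q / 21504" using Treal by linarith
qed

lemma g_pos: "g > 0" and g_sq: "g^2 = 64 * eps"
  using eps by (simp_all add: g_def power_mult_distrib)

lemma p_bounds: "0 < p" "p \<le> 1" "p \<le> 1600 * eps / sigma2"
  using eps sigma2 by (auto simp: p_def)

sublocale inst: hard_instance T L g
  by unfold_locales (use L g_pos in auto)

lemma in_FDL: "in_FDL T Delta L (hard_fun T L g) (hard_grad T L g)"
proof (rule inst.hard_in_FDL)
  have beta: "hard_beta L g = 2688 * eps / L"
    using g_sq L by (simp add: hard_beta_def hard_lam_def power2_eq_square field_simps)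
  have "2 * (real T + 1) * hard_beta L g \<le> 4 * real T * hard_beta L g"
    using T_bounds(1) inst.beta_pos by (intro mult_right_mono) auto
  also have "\<dots> \<le> 4 * (Q / 10752) * (2688 * eps / L)"
    unfolding beta using T_bounds(2) eps L by (intro mult_right_mono mult_left_mono) auto
  also have "\<dots> = Delta" using eps L by (simp add: Q_def field_simps)
  finally show "2 * (real T + 1) * hard_beta L g \<le> Delta" .
qed

lemma admissible: "admissible_oracles n T sigma2 (hard_grad T L g) (\<lambda>_. bernoulli01 p) G"
  unfolding admissible_oracles_def G_def
proof (intro conjI allI ballI)
  have "p = 1 \<or> p = 25 * g^2 / sigma2" using g_sq by (auto simp: p_def min_def)
  then show "integral\<^sup>L (bernoulli01 p)
      (\<lambda>xi. (normd T (\<lambda>j. sparse_oracle T L g p x xi j - hard_grad T L g x j))^2) \<le> sigma2" for x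
    by (rule inst.sparse_oracle_variance[OF p_bounds(1,2) sigma2])
qed (use p_bounds inst.sparse_oracle_in_vecd inst.sparse_oracle_unbiased
       integrable_bernoulli01 prob_space_bernoulli01 in auto)

lemma rate_pos: "m \<in> {1..n} \<Longrightarrow> rate m > 0"
  using L Delta eps sigma2 tau_pos unfolding rate_def
  by (intro mult_pos_pos divide_pos_pos add_pos_pos sum_pos) auto

lemma horizon_pos: "horizon > 0"
  using Min_in[of "rate ` {1..n}"] rate_pos n unfolding horizon_def by force

lemma horizon_div_theta: "horizon / \<theta> \<le> real T / 2"
proof -
  have "2 * horizon / real T \<le> \<theta>" "0 < 2 * horizon / real T" "0 < \<theta>"
    using horizon_pos T_bounds(1) tau1 by (auto simp: \<theta>_def)
  then have "horizon / \<theta> \<le> horizon / (2 * horizon / real T)"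
    using horizon_pos by (intro divide_left_mono mult_pos_pos) auto
  also have "\<dots> = real T / 2" using horizon_pos by simp
  finally show ?thesis .
qed

lemma Fs_eq: "Fs = {1..card Fs}"
proof (rule down_closed_eq_atLeastAtMost)
  show "finite Fs" by (simp add: Fs_def)
  show "j \<in> Fs" if "i \<in> Fs" "1 \<le> j" "j \<le> i" for i j
    using that tau_sorted by (auto simp: Fs_def) (meson order.strict_trans1)
qed (auto simp: Fs_def)

lemma fast_budget: "p * (\<Sum>i\<in>Fs. horizon / tau i) \<le> real T / 4"
proof (cases "Fs = {}")
  case True then show ?thesis by simp
next
  case False
  define m0 where "m0 = card Fs"
  have m0: "m0 \<in> {1..n}"
    using False Fs_eq card_mono[of "{1..n}" Fs] unfolding m0_def Fs_def by fastforce
  define H where "H = (\<Sum>i=1..m0. 1 / tau i)"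
  have H: "H > 0" using m0 tau_pos unfolding H_def by (intro sum_pos) auto
  have sumH: "(\<Sum>i\<in>Fs. horizon / tau i) = horizon * H"
    unfolding H_def m0_def by (subst Fs_eq) (simp add: sum_distrib_left)
  have "horizon * H \<le> 1 / (12800 * 21504) * rate m0 * H"
    using Min_le[of "rate ` {1..n}" "rate m0"] m0 H unfolding horizon_def by simp
  also have "\<dots> = 1 / (12800 * 21504) * (real m0 * Q + sigma2 * Q / eps)"
    using H m0 eps unfolding rate_def H_def Q_def by (simp add: field_simps power2_eq_square)
  finally have up: "horizon * H \<le> 1 / (12800 * 21504) * (real m0 * Q + sigma2 * Q / eps)" .
  have "(\<Sum>i\<in>Fs. real T / 2) \<le> (\<Sum>i\<in>Fs. horizon / tau i)"
  proof (rule sum_mono)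
    fix i assume i: "i \<in> Fs"
    then have "tau i > 0" "tau i < 2 * horizon / real T" using tau_pos by (auto simp: Fs_def)
    then show "real T / 2 \<le> horizon / tau i" using T_bounds(1) by (simp add: field_simps)
  qed
  then have low: "real m0 * real T / 2 \<le> horizon * H" using sumH by (simp add: m0_def)
  have "p * (horizon * H) \<le> real T / 4"
    by (rule horizon_budget_arith[OF _ eps sigma2 refl T_bounds(3) _ up low])
      (use Q_ge p_bounds in auto)
  then show ?thesis using sumH by simp
qed

lemma expected_min_grad_sq:
  "(\<integral>\<omega>. (INF k\<in>S_set (A T) tau G \<omega> horizon. (normd T (hard_grad T L g (proto_point (A T) tau G \<omega> k)))^2)
     \<partial>sample_measure (\<lambda>_. bernoulli01 p)) > eps"
proof -
  interpret lb: lower_bound n T "A T" tau G Fs \<theta> p horizon T "hard_grad T L g" "4 * eps"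
  proof (intro lower_bound.intro progress_bound.intro protocol.intro progress_bound_axioms.intro
      lower_bound_axioms.intro)
    show "is_algorithm n T (A T)" "zero_respecting d (A d)" for d using algos by auto
    show "x \<in> vecd T \<Longrightarrow> G x xi \<in> vecd T" for x xi
      unfolding G_def by (rule inst.sparse_oracle_in_vecd)
    show "(xi = 1) = (xi' = 1) \<Longrightarrow> G x xi = G x xi'" for x xi xi'
      by (auto simp: G_def sparse_oracle_def fun_eq_iff)
    show "supported_below x P \<Longrightarrow> supported_below (G x xi) (Suc P)" for x P xi
      unfolding G_def by (rule inst.sparse_oracle_supported_Suc)
    show "x \<in> vecd T \<Longrightarrow> supported_below x P \<Longrightarrow> xi \<noteq> 1 \<Longrightarrow> supported_below (G x xi) P" for x P xi
      unfolding G_def by (rule inst.sparse_oracle_supported)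
    show "i \<in> {1..n} \<Longrightarrow> i \<notin> Fs \<Longrightarrow> \<theta> \<le> tau i" for i
      using tau_sorted by (auto simp: Fs_def \<theta>_def)
    show "x \<in> vecd T \<Longrightarrow> x (T - 1) = 0 \<Longrightarrow> 4 * eps \<le> (normd T (hard_grad T L g x))\<^sup>2" for x
      using inst.hard_grad_large[of x] T_bounds(1) g_sq by (simp add: power_divide)
    show "0 < \<theta>" using tau1 by (simp add: \<theta>_def)
  qed (use tau_pos p_bounds horizon_pos horizon_div_theta fast_budget T_bounds(1) eps in
       \<open>auto simp: Fs_def\<close>)
  have "lb.min_grad_sq = (\<lambda>\<omega>. INF k\<in>S_set (A T) tau G \<omega> horizon.
      (normd T (hard_grad T L g (proto_point (A T) tau G \<omega> k)))^2)"
    by (simp add: lb.min_grad_sq_def lb.grad_sq_def fun_eq_iff)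
  then show ?thesis using lb.integral_min_grad_sq_ge eps by (simp add: sample_measure_bernoulli01)
qed

lemma lower_bound_witness:
  "\<exists>(d::nat) (f::vecn \<Rightarrow> real) (gf::vecn \<Rightarrow> vecn) (D::nat \<Rightarrow> real measure) (G::vecn \<Rightarrow> real \<Rightarrow> vecn).
     in_FDL d Delta L f gf \<and> admissible_oracles n d sigma2 gf D G \<and>
     (let t = 1 / (12800 * 21504) * Min ((\<lambda>m. (real m / (\<Sum>i=1..m. 1 / tau i)) *
                           (L * Delta / eps + sigma2 * L * Delta / (real m * eps^2))) ` {1..n})
      in (\<integral>\<omega>. (INF k\<in>S_set (A d) tau G \<omega> t. (normd d (gf (proto_point (A d) tau G \<omega> k)))^2)
            \<partial>sample_measure D) > eps)"
  using in_FDL admissible expected_min_grad_sq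
  unfolding Let_def horizon_def rate_def[abs_def] by blast

end

theorem mainTheorem1:
  shows "\<exists>c>0. \<exists>c'>0. \<forall>(n::nat) (sigma2::real) (tau::nat \<Rightarrow> real) (L::real) (Delta::real)
            (eps::real) (A::nat \<Rightarrow> algo).
     n \<ge> 1 \<longrightarrow> sigma2 > 0 \<longrightarrow> 0 < tau 1 \<longrightarrow>
     (\<forall>i j. 1 \<le> i \<longrightarrow> i \<le> j \<longrightarrow> j \<le> n \<longrightarrow> tau i \<le> tau j) \<longrightarrow>
     L > 0 \<longrightarrow> Delta > 0 \<longrightarrow> 0 < eps \<longrightarrow> eps \<le> c' * L * Delta \<longrightarrow>
     (\<forall>d. is_algorithm n d (A d) \<and> zero_respecting d (A d)) \<longrightarrow>
     (\<exists>(d::nat) (f::vecn \<Rightarrow> real) (gf::vecn \<Rightarrow> vecn) (D::nat \<Rightarrow> real measure)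
         (G::vecn \<Rightarrow> real \<Rightarrow> vecn).
        in_FDL d Delta L f gf \<and> admissible_oracles n d sigma2 gf D G \<and>
        (let t = c * Min ((\<lambda>m. (real m / (\<Sum>i=1..m. 1 / tau i)) *
                              (L * Delta / eps + sigma2 * L * Delta / (real m * eps^2))) ` {1..n})
         in (\<integral>\<omega>. (INF k\<in>S_set (A d) tau G \<omega> t. (normd d (gf (proto_point (A d) tau G \<omega> k)))^2)
               \<partial>sample_measure D) > eps))"
  by (intro exI[of _ "1 / (12800 * 21504) :: real"] exI[of _ "1 / 10752 :: real"] conjI allI impI
      hard_problem.lower_bound_witness hard_problem.intro) simp_all

end
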